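(* Let $\alpha,\beta,m,n$ be integers. Then for all $\tau\in\mathbb{H}$ and $z$ with $\theta_1(z|\tau)\ne0$, $$\theta'[{}^{\alpha}_{\beta}]\Big(z+\frac n2+\frac m2\tau\Big|\tau\Big)=\frac{i^{-m(\beta+n)}e^{-\frac14\pi im(4z+m\tau)}}{\theta_1(z|\tau)}\Big\{\big(\theta_1'(z|\tau)-\pi im\,\theta_1(z|\tau)\big)\theta[{}^{\alpha+m}_{\beta+n}](z|\tau)-\big\langle(\alpha+m)\big[\tfrac{\beta+n}{2}\big]\big\rangle\,\pi\,\vartheta[{}^{\alpha+m}_{\beta+n}](\tau)^2\,\theta[{}^{\alpha+m-1}_{\ \ 0}](z|\tau)\,\theta[{}^{\ \ 0}_{\beta+n-1}](z|\tau)\Big\}.$$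
   Context: $\mathbb{H}=\{\Im\tau>0\}$. For integers $\alpha,\beta$: $\theta[{}^{\alpha}_{\beta}](z|\tau)=\sum_{k\in\mathbb{Z}}\exp\big(\pi i(k+\tfrac\alpha2)^2\tau+2\pi i(k+\tfrac\alpha2)(z+\tfrac\beta2)\big)$, $\theta'[{}^{\alpha}_{\beta}]=\partial_z\theta[{}^{\alpha}_{\beta}]$, $\vartheta[{}^{\alpha}_{\beta}](\tau)=\theta[{}^{\alpha}_{\beta}](0|\tau)$. $\theta_1:=-\theta[{}^1_1]$ and $\theta_1'=\partial_z\theta_1$. $[x]$ denotes the integer part of $x$ and $\langle x\rangle=(-1)^x$. *)

theory Defs
  imports "HOL-Complex_Analysis.Complex_Analysis"
begin

definition theta_char :: "int \<Rightarrow> int \<Rightarrow> complex \<Rightarrow> complex \<Rightarrow> complex" where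
  "theta_char a b z \<tau> =
     (\<Sum>\<^sub>\<infinity>k::int. exp (pi * \<i> * (of_int k + of_int a / 2)\<^sup>2 * \<tau>
                      + 2 * pi * \<i> * (of_int k + of_int a / 2) * (z + of_int b / 2)))"

definition theta_char' :: "int \<Rightarrow> int \<Rightarrow> complex \<Rightarrow> complex \<Rightarrow> complex" where
  "theta_char' a b z \<tau> = deriv (\<lambda>w. theta_char a b w \<tau>) z"

definition theta_null :: "int \<Rightarrow> int \<Rightarrow> complex \<Rightarrow> complex" where
  "theta_null a b \<tau> = theta_char a b 0 \<tau>"

definition theta1 :: "complex \<Rightarrow> complex \<Rightarrow> complex" where
  "theta1 z \<tau> = - theta_char 1 1 z \<tau>"

definition theta1' :: "complex \<Rightarrow> complex \<Rightarrow> complex" where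
  "theta1' z \<tau> = deriv (\<lambda>w. theta1 w \<tau>) z"

end

theory Submission
  imports Defs
begin

text \<open>
  Writing \<open>\<theta>[a;b]\<close> for the theta function with characteristics, the shift \<open>w \<mapsto> w + m\<tau>/2\<close>
  turns \<open>\<theta>[\<alpha>;\<beta>]\<close> into \<open>\<theta>[\<alpha>+m;\<beta>]\<close> times an exponential, so the left-hand side equals that
  exponential times \<open>\<theta>'[a;b] - \<pi> i m \<theta>[a;b]\<close> with \<open>a = \<alpha>+m\<close>, \<open>b = \<beta>+n\<close>.  The theorem is thus the
  Wronskian identity \<open>\<theta>'[a;b] \<theta>\<^sub>1 - \<theta>\<^sub>1' \<theta>[a;b] = -\<epsilon> \<pi> \<vartheta>[a;b]\<^sup>2 \<theta>[a-1;0] \<theta>[0;b-1]\<close>.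
  Characteristics matter only modulo 2 up to the sign \<open>\<epsilon>\<close>, which leaves the three classical
  identities \<open>\<theta>\<^sub>j' \<theta>\<^sub>1 - \<theta>\<^sub>j \<theta>\<^sub>1' = -\<pi> \<theta>\<^sub>j(0)\<^sup>2 \<theta>\<^sub>k \<theta>\<^sub>l\<close>.  These come from differentiating the
  addition formulas \<open>\<theta>\<^sub>j(x+y) \<theta>\<^sub>1(x-y) \<theta>\<^sub>k(0) \<theta>\<^sub>l(0) = \<dots>\<close>, obtained in turn from the product
  formula for theta series at \<open>2\<tau>\<close>, together with Jacobi's derivative formula
  \<open>\<theta>\<^sub>1'(0) = \<pi> \<theta>\<^sub>2(0) \<theta>\<^sub>3(0) \<theta>\<^sub>4(0)\<close>.  For the latter, differentiating the addition formulas
  once more and using the heat equation shows that both sides solve the same first-order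
  differential equation in \<open>\<tau>\<close>; they are therefore proportional, and the constant is read off
  as \<open>\<tau> \<rightarrow> i\<infinity>\<close>.
\<close>

lemma summable_on_exp_neg_abs_int:
  "(\<lambda>k::int. exp (- \<bar>real_of_int k + c\<bar>)) summable_on UNIV"
proof -
  have geom: "(\<lambda>n::nat. exp (- real n)) summable_on UNIV"
  proof -
    have "summable (\<lambda>n::nat. exp (-1::real) ^ n)" by (rule summable_geometric) simp
    then show ?thesis
      by (subst summable_on_UNIV_nonneg_real_iff) (auto simp: exp_of_nat_mult[symmetric])
  qed
  have pos: "(\<lambda>k::int. exp (- \<bar>real_of_int k\<bar>)) summable_on range int"
    using geom by (subst summable_on_reindex) (simp_all add: o_def)
  have "(\<lambda>n::nat. exp (-1) * exp (- real n)) summable_on UNIV"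
    using geom by (rule summable_on_cmult_right)
  then have neg: "(\<lambda>k::int. exp (- \<bar>real_of_int k\<bar>)) summable_on range (\<lambda>n. - int n - 1)"
    by (subst summable_on_reindex) (auto simp: inj_on_def o_def exp_add[symmetric])
  have "(UNIV::int set) = range int \<union> range (\<lambda>n. - int n - 1)"
  proof -
    have "k \<in> range int \<union> range (\<lambda>n. - int n - 1)" for k :: int
    proof (cases "k \<ge> 0")
      case True
      then show ?thesis by (metis UnI1 nonneg_int_cases rangeI)
    next
      case False
      then show ?thesis by (intro UnI2 image_eqI[of _ _ "nat (- k - 1)"]) auto
    qed
    then show ?thesis by blast
  qed
  moreover have "range int \<inter> range (\<lambda>n::nat. - int n - 1) = {}" by auto
  ultimately have "(\<lambda>k::int. exp (- \<bar>real_of_int k\<bar>)) summable_on UNIV"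
    using summable_on_Un_disjoint[OF pos neg] by simp
  then have "(\<lambda>k::int. exp \<bar>c\<bar> * exp (- \<bar>real_of_int k\<bar>)) summable_on UNIV"
    by (rule summable_on_cmult_right)
  then show ?thesis
  proof (rule summable_on_comparison_test)
    fix k :: int
    have "- \<bar>real_of_int k + c\<bar> \<le> \<bar>c\<bar> + - \<bar>real_of_int k\<bar>" by linarith
    then show "exp (- \<bar>real_of_int k + c\<bar>) \<le> exp \<bar>c\<bar> * exp (- \<bar>real_of_int k\<bar>)"
      by (simp add: exp_add[symmetric])
  qed simp
qed

lemma power_le_fact_mult_exp:
  fixes x :: real
  assumes "x \<ge> 0"
  shows "x ^ n \<le> fact n * exp x"
proof -
  have "(\<Sum>i\<in>{n}. x ^ i /\<^sub>R fact i) \<le> (\<Sum>i. x ^ i /\<^sub>R fact i)"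
    by (rule sum_le_suminf) (use assms summable_exp_generic[of x] in auto)
  then have "x ^ n / fact n \<le> exp x"
    by (simp add: exp_def divide_inverse ac_simps)
  then show ?thesis by (simp add: field_simps)
qed

lemma quadratic_le_max:
  fixes s b y :: real
  assumes "s > 0"
  shows "- s * y\<^sup>2 + b * y \<le> b\<^sup>2 / (4 * s)"
proof -
  have "0 \<le> s * (y - b / (2 * s))\<^sup>2" using assms by simp
  also have "\<dots> = s * y\<^sup>2 - b * y + b\<^sup>2 / (4 * s)"
    using assms by (simp add: power2_eq_square field_simps)
  finally show ?thesis by linarith
qed

lemma abs_Im_diff_le_of_cball: "v \<in> cball w r \<Longrightarrow> \<bar>Im v - Im w\<bar> \<le> r"
  by (metis abs_Im_le_cmod dist_commute dist_complex_def mem_cball minus_complex.simps(2) order_trans)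

lemma has_field_derivative_infsum:
  fixes f f' :: "'a \<Rightarrow> complex \<Rightarrow> complex"
  assumes "open S" and w: "w \<in> S"
    and deriv: "\<And>k v. v \<in> S \<Longrightarrow> (f k has_field_derivative f' k v) (at v)"
    and bound: "\<And>v. v \<in> S \<Longrightarrow> \<exists>r>0. cball v r \<subseteq> S \<and>
                  (\<exists>M. M summable_on UNIV \<and> (\<forall>k. \<forall>u\<in>cball v r. norm (f k u) \<le> M k))"
  shows "((\<lambda>v. \<Sum>\<^sub>\<infinity>k. f k v) has_field_derivative (\<Sum>\<^sub>\<infinity>k. f' k w)) (at w)"
proof -
  obtain r M where r: "r > 0" "cball w r \<subseteq> S" and M: "M summable_on UNIV"
    and M_bound: "\<And>k v. v \<in> cball w r \<Longrightarrow> norm (f k v) \<le> M k"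
    using bound[OF w] by blast
  have unif: "uniform_limit (cball w r) (\<lambda>X v. \<Sum>k\<in>X. f k v) (\<lambda>v. \<Sum>\<^sub>\<infinity>k. f k v)
                (finite_subsets_at_top UNIV)"
    by (rule Weierstrass_m_test_general[OF _ M]) (use M_bound in auto)
  have partial_sums: "\<forall>\<^sub>F X in finite_subsets_at_top UNIV.
      continuous_on (cball w r) (\<lambda>v. \<Sum>k\<in>X. f k v) \<and>
      (\<forall>v\<in>ball w r. ((\<lambda>v. \<Sum>k\<in>X. f k v) has_field_derivative (\<Sum>k\<in>X. f' k v)) (at v))"
  proof (intro always_eventually allI conjI ballI)
    fix X :: "'a set"
    have "continuous_on (cball w r) (f k)" for k
      using deriv r(2) by (meson DERIV_continuous continuous_at_imp_continuous_on subsetD)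
    then show "continuous_on (cball w r) (\<lambda>v. \<Sum>k\<in>X. f k v)"
      by (intro continuous_on_sum) auto
    fix v assume "v \<in> ball w r"
    then have "v \<in> S" using r(2) by auto
    then show "((\<lambda>v. \<Sum>k\<in>X. f k v) has_field_derivative (\<Sum>k\<in>X. f' k v)) (at v)"
      by (intro DERIV_sum deriv)
  qed
  obtain g' where g': "\<And>v. v \<in> ball w r \<Longrightarrow>
      ((\<lambda>v. \<Sum>\<^sub>\<infinity>k. f k v) has_field_derivative g' v) (at v) \<and>
      ((\<lambda>X. \<Sum>k\<in>X. f' k v) \<longlongrightarrow> g' v) (finite_subsets_at_top UNIV)"
    by (rule has_complex_derivative_uniform_limit[OF partial_sums unif _ r(1)]) auto
  have "w \<in> ball w r" using r by simp
  note g'w = g'[OF this]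
  then have "(\<Sum>\<^sub>\<infinity>k. f' k w) = g' w"
    by (intro infsumI) (simp add: has_sum_def)
  then show ?thesis using g'w by simp
qed

lemma nonvanishing_ball:
  fixes g :: "complex \<Rightarrow> complex"
  assumes "open S" "continuous_on S g" "t0 \<in> S" "g t0 \<noteq> 0"
  obtains r where "r > 0" "ball t0 r \<subseteq> S" "\<And>t. t \<in> ball t0 r \<Longrightarrow> g t \<noteq> 0"
proof -
  obtain e where e: "e > 0" "\<And>t. t \<in> S \<Longrightarrow> dist t0 t < e \<Longrightarrow> g t \<noteq> 0"
    using continuous_on_avoid[OF assms(2-4)] by blast
  obtain r where r: "r > 0" "ball t0 r \<subseteq> S"
    using assms(1,3) open_contains_ball by blast
  show ?thesis
    by (rule that[of "min e r"]) (use e r in \<open>auto simp: subset_eq\<close>)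
qed

lemma holomorphic_eq_0_of_mult_eq_0:
  assumes S: "open S" "connected S" and "f holomorphic_on S" "g holomorphic_on S"
    and "t0 \<in> S" "g t0 \<noteq> 0" and fg: "\<And>t. t \<in> S \<Longrightarrow> g t * f t = 0" and "t \<in> S"
  shows "f t = 0"
proof -
  obtain r where r: "r > 0" "ball t0 r \<subseteq> S" "\<And>t. t \<in> ball t0 r \<Longrightarrow> g t \<noteq> 0"
    using nonvanishing_ball[OF S(1) holomorphic_on_imp_continuous_on] assms by metis
  have "f z = 0" if "z \<in> ball t0 r" for z
  proof -
    have "z \<in> S" "g z \<noteq> 0" using r(2) r(3)[OF that] that by auto
    then show ?thesis using fg[of z] by simp
  qed
  moreover have "ball t0 r \<noteq> {}" using r(1) by simp
  ultimately show ?thesis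
    using analytic_continuation_open[OF open_ball S(1) _ S(2) r(2) assms(3) holomorphic_on_const, of 0]
      \<open>t \<in> S\<close> by blast
qed

lemma proportional_of_wronskian_eq_0:
  fixes f g :: "complex \<Rightarrow> complex"
  assumes S: "open S" "connected S"
    and f: "\<And>t. t \<in> S \<Longrightarrow> (f has_field_derivative f' t) (at t)"
    and g: "\<And>t. t \<in> S \<Longrightarrow> (g has_field_derivative g' t) (at t)"
    and wronskian: "\<And>t. t \<in> S \<Longrightarrow> f' t * g t = f t * g' t"
    and t0: "t0 \<in> S" "g t0 \<noteq> 0"
  obtains c where "\<And>t. t \<in> S \<Longrightarrow> f t = c * g t"
proof -
  have holo: "f holomorphic_on S" "g holomorphic_on S"
    using f g S(1) holomorphic_on_open by blast+
  obtain r where r: "r > 0" "ball t0 r \<subseteq> S" "\<And>t. t \<in> ball t0 r \<Longrightarrow> g t \<noteq> 0"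
    using nonvanishing_ball[OF S(1) holomorphic_on_imp_continuous_on[OF holo(2)] t0] by metis
  have "\<exists>c. \<forall>t\<in>ball t0 r. f t / g t = c"
  proof (rule has_field_derivative_zero_constant)
    fix t assume t: "t \<in> ball t0 r"
    then have "t \<in> S" using r(2) by auto
    have "((\<lambda>t. f t / g t) has_field_derivative (f' t * g t - f t * g' t) / (g t * g t)) (at t)"
      by (rule DERIV_divide[OF f[OF \<open>t \<in> S\<close>] g[OF \<open>t \<in> S\<close>] r(3)[OF t]])
    then show "((\<lambda>t. f t / g t) has_field_derivative 0) (at t within ball t0 r)"
      using wronskian[OF \<open>t \<in> S\<close>] by (simp add: has_field_derivative_at_within)
  qed simp
  then obtain c where c: "\<And>t. t \<in> ball t0 r \<Longrightarrow> f t = c * g t"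
    using r(3) by (metis nonzero_eq_divide_eq)
  show ?thesis
  proof (rule that)
    fix t assume "t \<in> S"
    have "ball t0 r \<noteq> {}" "(\<lambda>t. c * g t) holomorphic_on S"
      using r(1) holo(2) by (auto intro: holomorphic_intros)
    then show "f t = c * g t"
      using analytic_continuation_open[OF open_ball S(1) _ S(2) r(2) holo(1)] c \<open>t \<in> S\<close> by blast
  qed
qed

lemma tendsto_infsum_dominated:
  fixes g :: "'a \<Rightarrow> real \<Rightarrow> 'b::banach"
  assumes M: "M summable_on UNIV"
    and bound: "\<And>k s. s \<ge> s0 \<Longrightarrow> norm (g k s) \<le> M k"
    and lim: "\<And>k. ((\<lambda>s. g k s) \<longlongrightarrow> l k) at_top"
  shows "((\<lambda>s. \<Sum>\<^sub>\<infinity>k. g k s) \<longlongrightarrow> (\<Sum>\<^sub>\<infinity>k. l k)) at_top"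
proof -
  have "norm (l k) \<le> M k" for k
  proof (rule tendsto_upperbound[OF tendsto_norm[OF lim]])
    show "\<forall>\<^sub>F s in at_top. norm (g k s) \<le> M k"
      using eventually_ge_at_top[of s0] by (rule eventually_mono) (rule bound)
  qed simp
  then have "(\<lambda>k. norm (l k)) summable_on UNIV"
    by (rule summable_on_comparison_test[OF M]) simp
  then have "l summable_on UNIV" by (rule abs_summable_summable)
  have unif: "uniform_limit {s0..} (\<lambda>X s. \<Sum>k\<in>X. g k s) (\<lambda>s. \<Sum>\<^sub>\<infinity>k. g k s) (finite_subsets_at_top UNIV)"
    by (rule Weierstrass_m_test_general[OF _ M]) (use bound in auto)
  show ?thesis
  proof (rule swap_uniform_limit'[OF _ _ unif])
    show "\<forall>\<^sub>F X in finite_subsets_at_top UNIV. ((\<lambda>s. \<Sum>k\<in>X. g k s) \<longlongrightarrow> (\<Sum>k\<in>X. l k)) at_top"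
      by (intro always_eventually allI tendsto_sum lim)
    show "((\<lambda>X. \<Sum>k\<in>X. l k) \<longlongrightarrow> (\<Sum>\<^sub>\<infinity>k. l k)) (finite_subsets_at_top UNIV)"
      using has_sum_infsum[OF \<open>l summable_on UNIV\<close>] unfolding has_sum_def .
    show "\<forall>\<^sub>F s in at_top. s \<in> {s0..}" using eventually_ge_at_top[of s0] by simp
  qed simp
qed

section \<open>Theta series and the heat equation\<close>

text \<open>\<open>theta_series j c t w\<close> is the \<open>j\<close>-th derivative in \<open>w\<close> of the theta function with
  real characteristic \<open>[2 c; 0]\<close> at \<open>(w | t)\<close>; \<open>theta_weight j c k\<close> is the factor produced by
  differentiating the \<open>k\<close>-th term \<open>j\<close> times.\<close>

definition theta_term :: "real \<Rightarrow> complex \<Rightarrow> complex \<Rightarrow> int \<Rightarrow> complex" where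
  "theta_term c t w k = exp (of_real pi * \<i> * (complex_of_real (of_int k + c))\<^sup>2 * t
                              + 2 * of_real pi * \<i> * complex_of_real (of_int k + c) * w)"

definition theta_weight :: "nat \<Rightarrow> real \<Rightarrow> int \<Rightarrow> complex" where
  "theta_weight j c k = (2 * of_real pi * \<i> * complex_of_real (of_int k + c)) ^ j"

definition theta_series :: "nat \<Rightarrow> real \<Rightarrow> complex \<Rightarrow> complex \<Rightarrow> complex" where
  "theta_series j c t w = (\<Sum>\<^sub>\<infinity>k. theta_weight j c k * theta_term c t w k)"

lemma theta_series_0: "theta_series 0 c t w = (\<Sum>\<^sub>\<infinity>k. theta_term c t w k)"
  by (simp add: theta_series_def theta_weight_def)

lemma theta_weight_Suc:
  "theta_weight (Suc j) c k = theta_weight j c k * (2 * of_real pi * \<i> * complex_of_real (of_int k + c))"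
  by (simp add: theta_weight_def)

text \<open>The terms decay like \<open>exp (- \<bar>k + c\<bar>)\<close> locally uniformly in \<open>t\<close> and \<open>w\<close>: the Gaussian factor
  \<open>exp (- pi (k + c)\<^sup>2 Im t)\<close> absorbs both the polynomial weight and \<open>exp (2 pi \<bar>k + c\<bar> \<bar>Im w\<bar>)\<close>.\<close>

lemma theta_term_bound:
  assumes "s > 0" "R \<ge> 0"
  obtains C where "\<And>k t w. Im t \<ge> s \<Longrightarrow> \<bar>Im w\<bar> \<le> R \<Longrightarrow>
    norm (theta_weight j c k * theta_term c t w k) \<le> C * exp (- \<bar>of_int k + c\<bar>)"
proof
  fix k t w
  assume t: "Im t \<ge> s" and w: "\<bar>Im w\<bar> \<le> R"
  define x where "x = of_int k + c"
  define K where "K = (2 * pi * R + 2)\<^sup>2 / (4 * (pi * s))"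
  have "norm (theta_weight j c k) = (2 * pi) ^ j * \<bar>x\<bar> ^ j"
    unfolding theta_weight_def x_def[symmetric] norm_power norm_mult norm_of_real
    by (simp add: power_mult_distrib)
  also have "\<dots> \<le> (2 * pi) ^ j * (fact j * exp \<bar>x\<bar>)"
    by (intro mult_left_mono power_le_fact_mult_exp) auto
  finally have weight: "norm (theta_weight j c k) \<le> (2 * pi) ^ j * fact j * exp \<bar>x\<bar>"
    by (simp add: mult.assoc)
  have "- pi * x\<^sup>2 * Im t \<le> - pi * x\<^sup>2 * s"
    using t by (simp add: mult_left_mono)
  moreover have "- 2 * pi * x * Im w \<le> 2 * pi * R * \<bar>x\<bar>"
  proof -
    have "\<bar>x * Im w\<bar> \<le> \<bar>x\<bar> * R" using w by (simp add: abs_mult mult_left_mono)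
    then have "2 * pi * (- (x * Im w)) \<le> 2 * pi * (R * \<bar>x\<bar>)"
      by (intro mult_left_mono) (auto simp: mult.commute)
    then show ?thesis by (simp add: algebra_simps)
  qed
  moreover have "- (pi * s) * \<bar>x\<bar>\<^sup>2 + (2 * pi * R + 2) * \<bar>x\<bar> \<le> K"
    unfolding K_def by (rule quadratic_le_max) (use assms in simp)
  moreover have "- (pi * s) * \<bar>x\<bar>\<^sup>2 + (2 * pi * R + 2) * \<bar>x\<bar> =
                 - pi * x\<^sup>2 * s + 2 * pi * R * \<bar>x\<bar> + \<bar>x\<bar> + \<bar>x\<bar>"
    by (simp add: power2_abs algebra_simps)
  ultimately have "- pi * x\<^sup>2 * Im t - 2 * pi * x * Im w \<le> K - \<bar>x\<bar> - \<bar>x\<bar>"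
    by linarith
  then have gauss: "norm (theta_term c t w k) \<le> exp K * exp (- \<bar>x\<bar>) * exp (- \<bar>x\<bar>)"
    by (simp add: theta_term_def x_def norm_exp_eq_Re power2_eq_square exp_add[symmetric])
  have "norm (theta_weight j c k * theta_term c t w k)
      \<le> ((2 * pi) ^ j * fact j * exp \<bar>x\<bar>) * (exp K * exp (- \<bar>x\<bar>) * exp (- \<bar>x\<bar>))"
    unfolding norm_mult by (intro mult_mono weight gauss) auto
  also have "\<dots> = ((2 * pi) ^ j * fact j * exp K) * exp (- \<bar>of_int k + c\<bar>)"
    by (simp add: x_def exp_minus field_simps)
  finally show "norm (theta_weight j c k * theta_term c t w k) \<le> \<dots>" .
qed

lemma summable_on_theta_terms:
  assumes "Im t > 0"
  shows "(\<lambda>k. theta_weight j c k * theta_term c t w k) summable_on UNIV"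
proof -
  obtain C where C: "\<And>k. norm (theta_weight j c k * theta_term c t w k) \<le> C * exp (- \<bar>of_int k + c\<bar>)"
    using theta_term_bound[OF assms, of "\<bar>Im w\<bar>" j c] by (metis abs_ge_zero order.refl)
  have "(\<lambda>k. norm (theta_weight j c k * theta_term c t w k)) summable_on UNIV"
    by (rule summable_on_comparison_test[OF summable_on_cmult_right[OF summable_on_exp_neg_abs_int]])
       (use C in auto)
  then show ?thesis by (simp add: summable_on_iff_abs_summable_on_complex)
qed

lemma summable_on_theta_term: "Im t > 0 \<Longrightarrow> theta_term c t w summable_on UNIV"
  using summable_on_theta_terms[of t 0 c w] by (simp add: theta_weight_def)

lemma theta_series_has_derivative_w:
  assumes "Im t > 0"
  shows "((\<lambda>w. theta_series j c t w) has_field_derivative theta_series (Suc j) c t w) (at w)"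
  unfolding theta_series_def
proof (rule has_field_derivative_infsum[where S=UNIV])
  fix k v
  show "((\<lambda>w. theta_weight j c k * theta_term c t w k) has_field_derivative
          theta_weight (Suc j) c k * theta_term c t v k) (at v)"
    unfolding theta_term_def theta_weight_Suc
    by (auto intro!: derivative_eq_intros simp: algebra_simps)
next
  fix v :: complex
  obtain C where C: "\<And>k t' u. Im t' \<ge> Im t \<Longrightarrow> \<bar>Im u\<bar> \<le> \<bar>Im v\<bar> + 1 \<Longrightarrow>
      norm (theta_weight j c k * theta_term c t' u k) \<le> C * exp (- \<bar>of_int k + c\<bar>)"
    using theta_term_bound[OF assms, of "\<bar>Im v\<bar> + 1" j c] by fastforce
  show "\<exists>r>0. cball v r \<subseteq> UNIV \<and> (\<exists>M. M summable_on UNIV \<and>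
          (\<forall>k. \<forall>u\<in>cball v r. norm (theta_weight j c k * theta_term c t u k) \<le> M k))"
  proof (intro exI conjI allI ballI)
    show "(\<lambda>k. C * exp (- \<bar>of_int k + c\<bar>)) summable_on UNIV"
      by (rule summable_on_cmult_right[OF summable_on_exp_neg_abs_int])
    fix k u assume "u \<in> cball v 1"
    then have "\<bar>Im u\<bar> \<le> \<bar>Im v\<bar> + 1" using abs_Im_diff_le_of_cball[of u v 1] by linarith
    then show "norm (theta_weight j c k * theta_term c t u k) \<le> C * exp (- \<bar>of_int k + c\<bar>)"
      by (rule C[OF order_refl])
  qed auto
qed auto

lemma theta_series_has_derivative_t:
  assumes "Im t > 0"
  shows "((\<lambda>t. theta_series j c t w) has_field_derivative
            theta_series (Suc (Suc j)) c t w / (4 * of_real pi * \<i>)) (at t)"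
proof -
  have "((\<lambda>t. theta_series j c t w) has_field_derivative
          (\<Sum>\<^sub>\<infinity>k. theta_weight (Suc (Suc j)) c k * theta_term c t w k / (4 * of_real pi * \<i>))) (at t)"
    unfolding theta_series_def
  proof (rule has_field_derivative_infsum[where S="{t. Im t > 0}"])
    show "open {t. Im t > 0}" by (simp add: open_halfspace_Im_gt)
    fix k v
    have "theta_weight (Suc (Suc j)) c k / (4 * of_real pi * \<i>) =
          theta_weight j c k * (of_real pi * \<i> * (complex_of_real (of_int k + c))\<^sup>2)"
      by (simp add: theta_weight_def power2_eq_square field_simps)
    then show "((\<lambda>t. theta_weight j c k * theta_term c t w k) has_field_derivative
                 theta_weight (Suc (Suc j)) c k * theta_term c v w k / (4 * of_real pi * \<i>)) (at v)"
      unfolding theta_term_def by (auto intro!: derivative_eq_intros simp: field_simps)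
  next
    fix v :: complex assume "v \<in> {t. Im t > 0}"
    then have s: "Im v / 2 > 0" by simp
    obtain C where C: "\<And>k t u. Im t \<ge> Im v / 2 \<Longrightarrow> \<bar>Im u\<bar> \<le> \<bar>Im w\<bar> \<Longrightarrow>
        norm (theta_weight j c k * theta_term c t u k) \<le> C * exp (- \<bar>of_int k + c\<bar>)"
      using theta_term_bound[OF s, of "\<bar>Im w\<bar>" j c] by auto
    have near: "Im u \<ge> Im v / 2" if "u \<in> cball v (Im v / 2)" for u
      using abs_Im_diff_le_of_cball[OF that] by linarith
    show "\<exists>r>0. cball v r \<subseteq> {t. Im t > 0} \<and> (\<exists>M. M summable_on UNIV \<and>
            (\<forall>k. \<forall>u\<in>cball v r. norm (theta_weight j c k * theta_term c u w k) \<le> M k))"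
    proof (intro exI conjI allI ballI)
      show "cball v (Im v / 2) \<subseteq> {t. Im t > 0}" using near s by force
      show "(\<lambda>k. C * exp (- \<bar>of_int k + c\<bar>)) summable_on UNIV"
        by (rule summable_on_cmult_right[OF summable_on_exp_neg_abs_int])
      fix k u assume "u \<in> cball v (Im v / 2)"
      then show "norm (theta_weight j c k * theta_term c u w k) \<le> C * exp (- \<bar>of_int k + c\<bar>)"
        by (intro C near) auto
    qed (use s in auto)
  qed (use assms in auto)
  also have "(\<Sum>\<^sub>\<infinity>k. theta_weight (Suc (Suc j)) c k * theta_term c t w k / (4 * of_real pi * \<i>)) =
             theta_series (Suc (Suc j)) c t w / (4 * of_real pi * \<i>)"
    unfolding theta_series_def divide_inverse by (rule infsum_cmult_left')
  finally show ?thesis .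
qed

section \<open>Quasi-periodicity\<close>

lemma theta_series_char_shift: "theta_series j (c + of_int n) t w = theta_series j c t w"
  unfolding theta_series_def
  by (rule infsum_reindex_bij_witness[of UNIV "\<lambda>k. k - n" "\<lambda>k. k + n"])
     (auto simp: theta_weight_def theta_term_def add_ac)

lemma theta_series_int_shift:
  "theta_series j c t (w + of_int n) = exp (2 * of_real pi * \<i> * of_real c * of_int n) * theta_series j c t w"
proof -
  have "theta_term c t (w + of_int n) k = exp (2 * of_real pi * \<i> * of_real c * of_int n) * theta_term c t w k"
    for k
  proof -
    have "theta_term c t (w + of_int n) k = exp ((of_real pi * \<i> * (complex_of_real (of_int k + c))\<^sup>2 * t
        + 2 * of_real pi * \<i> * complex_of_real (of_int k + c) * w + 2 * of_real pi * \<i> * of_real c * of_int n)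
        + \<i> * (of_int (k * n) * (of_real pi * 2)))"
      unfolding theta_term_def by (rule arg_cong[where f=exp]) (simp add: algebra_simps)
    then show ?thesis unfolding exp_plus_2pin by (simp add: theta_term_def exp_add)
  qed
  then show ?thesis
    unfolding theta_series_def by (subst infsum_cmult_right'[symmetric]) (simp add: mult_ac)
qed

lemma theta_series_uminus: "theta_series j c t (- w) = (-1) ^ j * theta_series j (- c) t w"
proof -
  have "theta_series j c t (- w) = (\<Sum>\<^sub>\<infinity>k. theta_weight j c (- k) * theta_term c t (- w) (- k))"
    unfolding theta_series_def by (rule infsum_reindex_bij_witness[of UNIV uminus uminus]) auto
  also have "\<dots> = (\<Sum>\<^sub>\<infinity>k. (-1) ^ j * (theta_weight j (- c) k * theta_term (- c) t w k))"
  proof -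
    have "theta_weight j c (- k) = (-1) ^ j * theta_weight j (- c) k" for k
      unfolding theta_weight_def by (simp add: power_mult_distrib[symmetric] algebra_simps)
    moreover have "theta_term c t (- w) (- k) = theta_term (- c) t w k" for k
      unfolding theta_term_def by (rule arg_cong[where f=exp]) (simp add: algebra_simps power2_eq_square)
    ultimately show ?thesis by (simp add: mult_ac)
  qed
  also have "\<dots> = (-1) ^ j * theta_series j (- c) t w"
    unfolding theta_series_def by (rule infsum_cmult_right')
  finally show ?thesis .
qed

lemma exp_i_pi_half: "exp (\<i> * of_real (pi / 2)) = \<i>"
  using cis_pi_half by (simp add: cis_conv_exp)

lemma theta_series_quarter_shift:
  "theta_series j (of_int p / 4) t (w + of_int n) = \<i> powi (p * n) * theta_series j (of_int p / 4) t w"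
proof -
  have "2 * of_real pi * \<i> * of_real (of_int p / 4) * of_int n = of_int (p * n) * (\<i> * of_real (pi / 2))"
    by simp
  then have "exp (2 * of_real pi * \<i> * of_real (of_int p / 4) * of_int n) = \<i> powi (p * n)"
    by (metis exp_power_int exp_i_pi_half)
  then show ?thesis by (simp only: theta_series_int_shift)
qed

lemma theta_series_unit_shifts:
  "theta_series j (1/4) t (w + 1) = \<i> * theta_series j (1/4) t w"
  "theta_series j (1/4) t (w - 1) = - \<i> * theta_series j (1/4) t w"
  "theta_series j (3/4) t (w + 1) = - \<i> * theta_series j (3/4) t w"
  "theta_series j (3/4) t (w - 1) = \<i> * theta_series j (3/4) t w"
  "theta_series j (1/2) t (w - 1) = - theta_series j (1/2) t w"
  "theta_series j 0 t (w - 1) = theta_series j 0 t w"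
  using theta_series_quarter_shift[of j 1 t w 1] theta_series_quarter_shift[of j 1 t w "-1"]
    theta_series_quarter_shift[of j 3 t w 1] theta_series_quarter_shift[of j 3 t w "-1"]
    theta_series_quarter_shift[of j 2 t w "-1"] theta_series_quarter_shift[of j 0 t w "-1"]
  by (simp_all add: power_int_minus eval_nat_numeral)

lemma theta_series_half_period_shift:
  "theta_series 0 c t (w + of_int m * t / 2) =
     exp (- (pi * \<i> * of_int m ^ 2 * t / 4) - pi * \<i> * of_int m * w) * theta_series 0 (c + of_int m / 2) t w"
proof -
  define E where "E = exp (- (pi * \<i> * of_int m ^ 2 * t / 4) - pi * \<i> * of_int m * w)"
  have term_shift: "theta_term c t (w + of_int m * t / 2) k = E * theta_term (c + of_int m / 2) t w k" for k
  proof -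
    have "pi * \<i> * (x + y)\<^sup>2 * t + 2 * pi * \<i> * (x + y) * (w + m * t / 2) =
          (- (pi * \<i> * m\<^sup>2 * t / 4) - pi * \<i> * m * w) + (pi * \<i> * (x + (y + m / 2))\<^sup>2 * t + 2 * pi * \<i> * (x + (y + m / 2)) * w)"
      for x y m :: complex
      by (simp add: field_simps power2_eq_square)
    from this[of "of_int k" "of_real c" "of_int m"] show ?thesis
      unfolding theta_term_def E_def exp_add[symmetric] by (intro arg_cong[where f=exp]) simp
  qed
  have "theta_series 0 c t (w + of_int m * t / 2) = (\<Sum>\<^sub>\<infinity>k. E * theta_term (c + of_int m / 2) t w k)"
    unfolding theta_series_0 by (rule infsum_cong) (rule term_shift)
  then show ?thesis unfolding E_def theta_series_0 infsum_cmult_right' .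
qed

lemma theta_series_1_half_period_shift:
  assumes t: "Im t > 0"
  shows "theta_series 1 c t (w + of_int m * t / 2) =
     exp (- (pi * \<i> * of_int m ^ 2 * t / 4) - pi * \<i> * of_int m * w) *
     (theta_series 1 (c + of_int m / 2) t w - pi * \<i> * of_int m * theta_series 0 (c + of_int m / 2) t w)"
proof -
  define E where "E w = exp (- (pi * \<i> * of_int m ^ 2 * t / 4) - pi * \<i> * of_int m * w)" for w
  have "((\<lambda>w. theta_series 0 c t (w + of_int m * t / 2)) has_field_derivative
          theta_series 1 c t (w + of_int m * t / 2)) (at w)"
    using DERIV_shift theta_series_has_derivative_w[OF t] by fastforce
  moreover have "((\<lambda>w. E w * theta_series 0 (c + of_int m / 2) t w) has_field_derivative
          E w * (- (pi * \<i> * of_int m)) * theta_series 0 (c + of_int m / 2) t w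
          + theta_series 1 (c + of_int m / 2) t w * E w) (at w)"
    unfolding E_def by (intro DERIV_mult theta_series_has_derivative_w[OF t, of 0, folded One_nat_def])
                       (auto intro!: derivative_eq_intros simp: algebra_simps)
  ultimately have "theta_series 1 c t (w + of_int m * t / 2) =
      E w * (- (pi * \<i> * of_int m)) * theta_series 0 (c + of_int m / 2) t w
      + theta_series 1 (c + of_int m / 2) t w * E w"
    using DERIV_unique theta_series_half_period_shift unfolding E_def by (metis (no_types, lifting) ext)
  then show ?thesis unfolding E_def by (simp add: algebra_simps)
qed

section \<open>The product formula and the addition formulas\<close>

lemma infsum_mult_infsum:
  fixes f :: "'a \<Rightarrow> complex" and g :: "'b \<Rightarrow> complex"
  assumes f: "f summable_on UNIV" and g: "g summable_on UNIV"
  shows "(\<lambda>(j, k). f j * g k) summable_on UNIV"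
    and "(\<Sum>\<^sub>\<infinity>j. f j) * (\<Sum>\<^sub>\<infinity>k. g k) = (\<Sum>\<^sub>\<infinity>(j, k). f j * g k)"
proof -
  have f_abs: "(\<lambda>j. norm (f j)) summable_on UNIV" and g_abs: "(\<lambda>k. norm (g k)) summable_on UNIV"
    using f g by (simp_all add: summable_on_iff_abs_summable_on_complex)
  have "(\<lambda>j. norm (f j) * (\<Sum>\<^sub>\<infinity>k. norm (g k))) summable_on UNIV"
    by (rule summable_on_cmult_left[OF f_abs])
  moreover have "norm (\<Sum>\<^sub>\<infinity>k. norm (f j * g k)) = norm (f j) * (\<Sum>\<^sub>\<infinity>k. norm (g k))" for j
    using infsum_nonneg[of UNIV "\<lambda>k. norm (g k)"] by (simp add: norm_mult infsum_cmult_right')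
  ultimately have "(\<lambda>p. norm ((\<lambda>(j, k). f j * g k) p)) summable_on Sigma UNIV (\<lambda>_. UNIV)"
    using summable_on_cmult_right[OF g_abs]
    by (intro iffD2[OF Infinite_Sum.abs_summable_on_Sigma_iff]) (simp_all add: norm_mult)
  then show S: "(\<lambda>(j, k). f j * g k) summable_on UNIV"
    by (simp add: summable_on_iff_abs_summable_on_complex)
  have "(\<Sum>\<^sub>\<infinity>(j, k). f j * g k) = (\<Sum>\<^sub>\<infinity>j. \<Sum>\<^sub>\<infinity>k. f j * g k)"
    using infsum_Sigma_banach[of "\<lambda>(j, k). f j * g k" UNIV "\<lambda>_. UNIV"] S by simp
  also have "\<dots> = (\<Sum>\<^sub>\<infinity>j. f j) * (\<Sum>\<^sub>\<infinity>k. g k)"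
    by (simp add: infsum_cmult_right' infsum_cmult_left')
  finally show "(\<Sum>\<^sub>\<infinity>j. f j) * (\<Sum>\<^sub>\<infinity>k. g k) = (\<Sum>\<^sub>\<infinity>(j, k). f j * g k)" by simp
qed

lemma infsum_int_pairs_parity:
  fixes F :: "int \<times> int \<Rightarrow> complex" and e :: int
  assumes e: "e = 0 \<or> e = 1"
  shows "infsum F {(j, k). (j + k) mod 2 = e} = (\<Sum>\<^sub>\<infinity>(P, R). F (P + R + e, P - R))"
proof (rule infsum_reindex_bij_witness[of _ "\<lambda>(P, R). (P + R + e, P - R)"
                                          "\<lambda>(j, k). ((j + k - e) div 2, (j - k - e) div 2)"])
  fix a assume "a \<in> {(j, k). (j + k) mod 2 = e}"
  then obtain j k where a: "a = (j, k)" and "(j + k) mod 2 = e" by auto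
  then have "(j + k - e) div 2 + (j - k - e) div 2 + e = j" "(j + k - e) div 2 - (j - k - e) div 2 = k"
    by presburger+
  then show "(\<lambda>(P, R). (P + R + e, P - R)) ((\<lambda>(j, k). ((j + k - e) div 2, (j - k - e) div 2)) a) = a"
    unfolding a by simp
  then show "(\<lambda>(P, R). F (P + R + e, P - R)) ((\<lambda>(j, k). ((j + k - e) div 2, (j - k - e) div 2)) a) = F a"
    by (simp add: case_prod_beta)
next
  fix b :: "int \<times> int"
  obtain P R where "b = (P, R)" by fastforce
  then show "(\<lambda>(j, k). ((j + k - e) div 2, (j - k - e) div 2)) ((\<lambda>(P, R). (P + R + e, P - R)) b) = b"
    and "(\<lambda>(P, R). (P + R + e, P - R)) b \<in> {(j, k). (j + k) mod 2 = e}"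
    using e by auto
qed auto

lemma theta_term_mult:
  "theta_term c1 t x (P + R + e) * theta_term c2 t y (P - R) =
   theta_term ((of_int e + c1 + c2) / 2) (2 * t) (x + y) P * theta_term ((of_int e + c1 - c2) / 2) (2 * t) (x - y) R"
proof -
  have "pi * \<i> * (p + r + e + d1)\<^sup>2 * t + 2 * pi * \<i> * (p + r + e + d1) * x +
      (pi * \<i> * (p - r + d2)\<^sup>2 * t + 2 * pi * \<i> * (p - r + d2) * y) =
    pi * \<i> * (p + (e + d1 + d2) / 2)\<^sup>2 * (2 * t) + 2 * pi * \<i> * (p + (e + d1 + d2) / 2) * (x + y) +
      (pi * \<i> * (r + (e + d1 - d2) / 2)\<^sup>2 * (2 * t) + 2 * pi * \<i> * (r + (e + d1 - d2) / 2) * (x - y))"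
    for p r e d1 d2 :: complex
    by (simp add: field_simps power2_eq_square)
  from this[of "of_int P" "of_int R" "of_int e" "of_real c1" "of_real c2"] show ?thesis
    unfolding theta_term_def exp_add[symmetric] by (intro arg_cong[where f=exp]) simp
qed

text \<open>Splitting the double series according to the parity of \<open>j + k\<close> and substituting
  \<open>j = P + R + e\<close>, \<open>k = P - R\<close> turns a product of two theta series into a sum of two products
  at \<open>2 t\<close>.\<close>

lemma theta_series_product:
  assumes t: "Im t > 0"
  shows "theta_series 0 c1 t x * theta_series 0 c2 t y =
    theta_series 0 ((c1 + c2) / 2) (2 * t) (x + y) * theta_series 0 ((c1 - c2) / 2) (2 * t) (x - y) +
    theta_series 0 ((1 + c1 + c2) / 2) (2 * t) (x + y) * theta_series 0 ((1 + c1 - c2) / 2) (2 * t) (x - y)"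
proof -
  have t2: "Im (2 * t) > 0" using t by simp
  define F where "F = (\<lambda>(j, k). theta_term c1 t x j * theta_term c2 t y k)"
  define C where "C e = {(j, k). (j + k) mod 2 = e}" for e :: int
  have F_summable: "F summable_on UNIV"
    unfolding F_def by (rule infsum_mult_infsum(1)[OF summable_on_theta_term[OF t] summable_on_theta_term[OF t]])
  have parity_class: "infsum F (C e) = theta_series 0 ((of_int e + c1 + c2) / 2) (2 * t) (x + y) *
                                 theta_series 0 ((of_int e + c1 - c2) / 2) (2 * t) (x - y)"
    if "e = 0 \<or> e = 1" for e
  proof -
    have "infsum F (C e) = (\<Sum>\<^sub>\<infinity>(P, R). F (P + R + e, P - R))"
      unfolding C_def by (rule infsum_int_pairs_parity[OF that])
    also have "\<dots> = (\<Sum>\<^sub>\<infinity>(P, R). theta_term ((of_int e + c1 + c2) / 2) (2 * t) (x + y) P *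
                                    theta_term ((of_int e + c1 - c2) / 2) (2 * t) (x - y) R)"
      unfolding F_def by (simp only: case_prod_beta fst_conv snd_conv theta_term_mult)
    also have "\<dots> = theta_series 0 ((of_int e + c1 + c2) / 2) (2 * t) (x + y) *
                     theta_series 0 ((of_int e + c1 - c2) / 2) (2 * t) (x - y)"
      unfolding theta_series_0
      by (rule infsum_mult_infsum(2)[OF summable_on_theta_term[OF t2] summable_on_theta_term[OF t2], symmetric])
    finally show ?thesis .
  qed
  have "UNIV = C 0 \<union> C 1" "C 0 \<inter> C 1 = {}" unfolding C_def by auto
  then have "infsum F UNIV = infsum F (C 0) + infsum F (C 1)"
    using F_summable by (metis infsum_Un_disjoint summable_on_subset_banach top_greatest)
  moreover have "theta_series 0 c1 t x * theta_series 0 c2 t y = infsum F UNIV"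
    unfolding theta_series_0 F_def
    by (rule infsum_mult_infsum(2)[OF summable_on_theta_term[OF t] summable_on_theta_term[OF t]])
  ultimately show ?thesis using parity_class[of 0] parity_class[of 1] by simp
qed

lemma theta_series_products:
  assumes t: "Im t > 0"
  shows "theta_series 0 0 t x * theta_series 0 (1/2) t y =
           theta_series 0 (1/4) (2 * t) (x + y) * theta_series 0 (3/4) (2 * t) (x - y) +
           theta_series 0 (3/4) (2 * t) (x + y) * theta_series 0 (1/4) (2 * t) (x - y)"
    and "theta_series 0 (1/2) t x * theta_series 0 0 t y =
           theta_series 0 (1/4) (2 * t) (x + y) * theta_series 0 (1/4) (2 * t) (x - y) +
           theta_series 0 (3/4) (2 * t) (x + y) * theta_series 0 (3/4) (2 * t) (x - y)"
    and "theta_series 0 (1/2) t x * theta_series 0 (1/2) t y =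
           theta_series 0 (1/2) (2 * t) (x + y) * theta_series 0 0 (2 * t) (x - y) +
           theta_series 0 0 (2 * t) (x + y) * theta_series 0 (1/2) (2 * t) (x - y)"
    and "theta_series 0 0 t x * theta_series 0 0 t y =
           theta_series 0 0 (2 * t) (x + y) * theta_series 0 0 (2 * t) (x - y) +
           theta_series 0 (1/2) (2 * t) (x + y) * theta_series 0 (1/2) (2 * t) (x - y)"
  using theta_series_product[OF t, of 0 x "1/2" y] theta_series_product[OF t, of "1/2" x 0 y]
    theta_series_product[OF t, of "1/2" x "1/2" y] theta_series_product[OF t, of 0 x 0 y]
    theta_series_char_shift[of 0 "- 1/4" 1 "2 * t"] theta_series_char_shift[of 0 0 1 "2 * t"]
  by (simp_all add: field_simps)

text \<open>\<open>jtheta\<^sub>i j t z\<close> is the \<open>j\<close>-th \<open>z\<close>-derivative of Jacobi's \<open>\<theta>\<^sub>i(z | t)\<close>.\<close>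

definition jtheta1 :: "nat \<Rightarrow> complex \<Rightarrow> complex \<Rightarrow> complex" where
  "jtheta1 j t z = - theta_series j (1/2) t (z + 1/2)"

definition jtheta2 :: "nat \<Rightarrow> complex \<Rightarrow> complex \<Rightarrow> complex" where
  "jtheta2 j t z = theta_series j (1/2) t z"

definition jtheta3 :: "nat \<Rightarrow> complex \<Rightarrow> complex \<Rightarrow> complex" where
  "jtheta3 j t z = theta_series j 0 t z"

definition jtheta4 :: "nat \<Rightarrow> complex \<Rightarrow> complex \<Rightarrow> complex" where
  "jtheta4 j t z = theta_series j 0 t (z + 1/2)"

text \<open>By the product formula, every product of two Jacobi thetas occurring below is a linear
  combination of two theta series in \<open>2 w\<close> at \<open>2 t\<close>, so each addition formula reduces to the
  expansion of a \<open>2 \<times> 2\<close> determinant.\<close>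

lemma jtheta3_addition:
  assumes t: "Im t > 0"
  shows "jtheta3 0 t (x + y) * jtheta1 0 t (x - y) * (jtheta2 0 t 0 * jtheta4 0 t 0) =
         jtheta1 0 t x * jtheta3 0 t x * (jtheta2 0 t y * jtheta4 0 t y)
         - jtheta2 0 t x * jtheta4 0 t x * (jtheta1 0 t y * jtheta3 0 t y)"
proof -
  define a where "a w = theta_series 0 (1/4) (2 * t) (2 * w + 1/2)" for w
  define b where "b w = theta_series 0 (3/4) (2 * t) (2 * w + 1/2)" for w
  define A where "A = theta_series 0 (1/4) (2 * t) (1/2)"
  have neg: "theta_series 0 c t' (- w) = theta_series 0 (- c) t' w" for c t' w
    using theta_series_uminus[of 0 c t' w] by simp
  have shift: "theta_series 0 (c - 1) t' w = theta_series 0 c t' w" for c t' w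
    using theta_series_char_shift[of 0 "c - 1" 1 t' w] by simp
  have B: "theta_series 0 (3/4) (2 * t) (1/2) = - \<i> * A"
  proof -
    have "theta_series 0 (3/4) (2 * t) (1/2) = theta_series 0 (1/4) (2 * t) (1/2 - 1)"
      using shift[of "3/4"] neg[of "1/4" "2 * t" "1/2"] by simp
    then show ?thesis unfolding theta_series_unit_shifts A_def .
  qed
  have A_neg: "theta_series 0 (1/4) (2 * t) (- (1/2)) = - \<i> * A"
    using neg[of "1/4" "2 * t" "1/2"] B shift[of "3/4" "2 * t" "1/2"] by simp
  have B_neg: "theta_series 0 (3/4) (2 * t) (- (1/2)) = A"
    using neg[of "3/4" "2 * t" "1/2"] shift[of "1/4" "2 * t" "1/2"] unfolding A_def by simp
  have sum_diff: "jtheta3 0 t (x + y) * jtheta1 0 t (x - y) = - \<i> * (a x * b y - b x * a y)"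
  proof -
    have e1: "x + y + (x - y + 1/2) = 2 * x + 1/2" by simp
    have e2: "x + y - (x - y + 1/2) = (2 * y + 1/2) - 1" by simp
    have "jtheta3 0 t (x + y) * jtheta1 0 t (x - y) = - (theta_series 0 0 t (x + y) * theta_series 0 (1/2) t (x - y + 1/2))"
      by (simp add: jtheta3_def jtheta1_def)
    also have "\<dots> = - (a x * (\<i> * b y) + b x * (- \<i> * a y))"
      using theta_series_products(1)[OF t, of "x + y" "x - y + 1/2"]
      unfolding e1 e2 theta_series_unit_shifts a_def b_def by simp
    finally show ?thesis by (simp add: algebra_simps)
  qed
  have prod13: "jtheta1 0 t w * jtheta3 0 t w = - A * (a w - \<i> * b w)" for w
  proof -
    have "jtheta1 0 t w * jtheta3 0 t w = - (theta_series 0 (1/2) t (w + 1/2) * theta_series 0 0 t w)"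
      by (simp add: jtheta3_def jtheta1_def)
    also have "\<dots> = - (a w * A + b w * (- \<i> * A))"
      using theta_series_products(2)[OF t, of "w + 1/2" w] B unfolding a_def b_def A_def
      by (simp add: algebra_simps)
    finally show ?thesis by (simp add: algebra_simps)
  qed
  have prod24: "jtheta2 0 t w * jtheta4 0 t w = A * (- \<i> * a w + b w)" for w
  proof -
    have e2: "w - (w + 1/2) = - (1/2::complex)" by simp
    have "jtheta2 0 t w * jtheta4 0 t w = theta_series 0 (1/2) t w * theta_series 0 0 t (w + 1/2)"
      by (simp add: jtheta2_def jtheta4_def)
    also have "\<dots> = a w * (- \<i> * A) + b w * A"
      using theta_series_products(2)[OF t, of w "w + 1/2"] unfolding e2 A_neg B_neg a_def b_def
      by (simp add: algebra_simps)
    finally show ?thesis by (simp add: algebra_simps)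
  qed
  have "a 0 = A" "b 0 = - \<i> * A" using B by (simp_all add: a_def b_def A_def)
  then show ?thesis unfolding sum_diff prod13 prod24 by (simp add: algebra_simps)
qed

lemma jtheta2_addition:
  assumes t: "Im t > 0"
  shows "jtheta2 0 t (x + y) * jtheta1 0 t (x - y) * (jtheta3 0 t 0 * jtheta4 0 t 0) =
         jtheta1 0 t x * jtheta2 0 t x * (jtheta3 0 t y * jtheta4 0 t y)
         - jtheta3 0 t x * jtheta4 0 t x * (jtheta1 0 t y * jtheta2 0 t y)"
proof -
  define p where "p w = theta_series 0 0 (2 * t) (2 * w + 1/2)" for w
  define r where "r w = theta_series 0 (1/2) (2 * t) (2 * w + 1/2)" for w
  define P where "P = theta_series 0 0 (2 * t) (1/2)"
  have half: "- (1/2) = (1/2::complex) - 1" by simp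
  have R0: "theta_series 0 (1/2) (2 * t) (1/2) = 0"
  proof -
    have "theta_series 0 (1/2) (2 * t) (- (1/2)) = theta_series 0 (- 1/2) (2 * t) (1/2)"
      using theta_series_uminus[of 0 "1/2" "2 * t" "1/2"] by simp
    also have "\<dots> = theta_series 0 (1/2) (2 * t) (1/2)"
      using theta_series_char_shift[of 0 "- 1/2" 1 "2 * t" "1/2"] by simp
    finally show ?thesis unfolding half theta_series_unit_shifts by simp
  qed
  have R0_neg: "theta_series 0 (1/2) (2 * t) (- (1/2)) = 0"
    unfolding half theta_series_unit_shifts R0 by simp
  have P_neg: "theta_series 0 0 (2 * t) (- (1/2)) = P"
    unfolding half theta_series_unit_shifts P_def ..
  have sum_diff: "jtheta2 0 t (x + y) * jtheta1 0 t (x - y) = - (r x * p y - p x * r y)"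
  proof -
    have e1: "x + y + (x - y + 1/2) = 2 * x + 1/2" by simp
    have e2: "x + y - (x - y + 1/2) = (2 * y + 1/2) - 1" by simp
    have "jtheta2 0 t (x + y) * jtheta1 0 t (x - y) =
          - (theta_series 0 (1/2) t (x + y) * theta_series 0 (1/2) t (x - y + 1/2))"
      by (simp add: jtheta2_def jtheta1_def)
    also have "\<dots> = - (r x * p y + p x * (- r y))"
      using theta_series_products(3)[OF t, of "x + y" "x - y + 1/2"]
      unfolding e1 e2 theta_series_unit_shifts p_def r_def by simp
    finally show ?thesis by (simp add: algebra_simps)
  qed
  have prod12: "jtheta1 0 t w * jtheta2 0 t w = - P * r w" for w
  proof -
    have "jtheta1 0 t w * jtheta2 0 t w = - (theta_series 0 (1/2) t (w + 1/2) * theta_series 0 (1/2) t w)"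
      by (simp add: jtheta1_def jtheta2_def)
    also have "\<dots> = - (r w * P)"
      using theta_series_products(3)[OF t, of "w + 1/2" w] R0 unfolding p_def r_def P_def
      by (simp add: algebra_simps)
    finally show ?thesis by (simp add: algebra_simps)
  qed
  have prod34: "jtheta3 0 t w * jtheta4 0 t w = P * p w" for w
  proof -
    have e2: "w - (w + 1/2) = - (1/2::complex)" by simp
    have "jtheta3 0 t w * jtheta4 0 t w = theta_series 0 0 t w * theta_series 0 0 t (w + 1/2)"
      by (simp add: jtheta3_def jtheta4_def)
    also have "\<dots> = p w * P"
      using theta_series_products(4)[OF t, of w "w + 1/2"] unfolding e2 P_neg R0_neg p_def
      by (simp add: algebra_simps)
    finally show ?thesis by (simp add: algebra_simps)
  qed
  have "p 0 = P" unfolding p_def P_def by simp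
  then show ?thesis unfolding sum_diff prod12 prod34 by (simp add: algebra_simps)
qed

lemma jtheta4_addition:
  assumes t: "Im t > 0"
  shows "jtheta4 0 t (x + y) * jtheta1 0 t (x - y) * (jtheta2 0 t 0 * jtheta3 0 t 0) =
         jtheta1 0 t x * jtheta4 0 t x * (jtheta2 0 t y * jtheta3 0 t y)
         - jtheta2 0 t x * jtheta3 0 t x * (jtheta1 0 t y * jtheta4 0 t y)"
proof -
  define u where "u w = theta_series 0 (1/4) (2 * t) (2 * w)" for w
  define v where "v w = theta_series 0 (3/4) (2 * t) (2 * w)" for w
  define C where "C = theta_series 0 (1/4) (2 * t) 0"
  have C3: "theta_series 0 (3/4) (2 * t) 0 = C"
  proof -
    have "theta_series 0 (3/4) (2 * t) 0 = theta_series 0 (- 1/4) (2 * t) 0"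
      using theta_series_char_shift[of 0 "- 1/4" 1 "2 * t" 0] by simp
    also have "\<dots> = C"
      using theta_series_uminus[of 0 "1/4" "2 * t" 0] unfolding C_def by simp
    finally show ?thesis .
  qed
  have sum_diff: "jtheta4 0 t (x + y) * jtheta1 0 t (x - y) = - (\<i> * u x * v y - \<i> * v x * u y)"
  proof -
    have e1: "x + y + 1/2 + (x - y + 1/2) = 2 * x + 1" by simp
    have e2: "x + y + 1/2 - (x - y + 1/2) = 2 * y" by simp
    have "jtheta4 0 t (x + y) * jtheta1 0 t (x - y) =
          - (theta_series 0 0 t (x + y + 1/2) * theta_series 0 (1/2) t (x - y + 1/2))"
      by (simp add: jtheta4_def jtheta1_def)
    also have "\<dots> = - (\<i> * u x * v y + (- \<i>) * v x * u y)"
      using theta_series_products(1)[OF t, of "x + y + 1/2" "x - y + 1/2"]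
      unfolding e1 e2 theta_series_unit_shifts u_def v_def by simp
    finally show ?thesis by (simp add: algebra_simps)
  qed
  have prod14: "jtheta1 0 t w * jtheta4 0 t w = - (\<i> * u w * C - \<i> * v w * C)" for w
  proof -
    have e1: "w + 1/2 + (w + 1/2) = 2 * w + 1" by simp
    have "jtheta1 0 t w * jtheta4 0 t w = - (theta_series 0 (1/2) t (w + 1/2) * theta_series 0 0 t (w + 1/2))"
      by (simp add: jtheta1_def jtheta4_def)
    also have "\<dots> = - (\<i> * u w * C + (- \<i>) * v w * C)"
      using theta_series_products(2)[OF t, of "w + 1/2" "w + 1/2"] C3
      unfolding e1 theta_series_unit_shifts u_def v_def C_def by simp
    finally show ?thesis by (simp add: algebra_simps)
  qed
  have prod23: "jtheta2 0 t w * jtheta3 0 t w = u w * C + v w * C" for w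
  proof -
    have "jtheta2 0 t w * jtheta3 0 t w = theta_series 0 (1/2) t w * theta_series 0 0 t w"
      by (simp add: jtheta2_def jtheta3_def)
    also have "\<dots> = u w * C + v w * C"
      using theta_series_products(2)[OF t, of w w] C3 unfolding u_def v_def C_def mult_2[symmetric]
      by simp
    finally show ?thesis .
  qed
  have "u 0 = C" "v 0 = C" using C3 by (simp_all add: u_def v_def C_def)
  then show ?thesis unfolding sum_diff prod14 prod23 by (simp add: algebra_simps)
qed

section \<open>Wronskians from the addition formulas\<close>

lemma jtheta_has_derivative:
  assumes "Im t > 0"
  shows "(jtheta1 j t has_field_derivative jtheta1 (Suc j) t z) (at z)"
    and "(jtheta2 j t has_field_derivative jtheta2 (Suc j) t z) (at z)"
    and "(jtheta3 j t has_field_derivative jtheta3 (Suc j) t z) (at z)"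
    and "(jtheta4 j t has_field_derivative jtheta4 (Suc j) t z) (at z)"
proof -
  have shifted: "((\<lambda>z. theta_series j c t (z + a)) has_field_derivative theta_series (Suc j) c t (z + a)) (at z)"
    for c a
    using DERIV_shift theta_series_has_derivative_w[OF assms] by fastforce
  show "(jtheta1 j t has_field_derivative jtheta1 (Suc j) t z) (at z)"
    unfolding jtheta1_def[abs_def] by (intro DERIV_minus shifted)
  show "(jtheta4 j t has_field_derivative jtheta4 (Suc j) t z) (at z)"
    unfolding jtheta4_def[abs_def] by (rule shifted)
  show "(jtheta2 j t has_field_derivative jtheta2 (Suc j) t z) (at z)"
       "(jtheta3 j t has_field_derivative jtheta3 (Suc j) t z) (at z)"
    unfolding jtheta2_def[abs_def] jtheta3_def[abs_def] by (rule theta_series_has_derivative_w[OF assms])+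
qed

lemma theta_series_half_half_eq_0: "even j \<Longrightarrow> theta_series j (1/2) t (1/2) = 0"
proof -
  assume "even j"
  then have "theta_series j (1/2) t (1/2 - 1) = theta_series j (- 1/2) t (1/2)"
    using theta_series_uminus[of j "1/2" t "1/2"] by simp
  also have "\<dots> = theta_series j (1/2) t (1/2)"
    using theta_series_char_shift[of j "- 1/2" 1 t "1/2"] by simp
  finally show ?thesis unfolding theta_series_unit_shifts by simp
qed

lemma theta_series_odd_eq_0:
  assumes "odd j"
  shows "theta_series j (1/2) t 0 = 0" and "theta_series j 0 t 0 = 0" and "theta_series j 0 t (1/2) = 0"
proof -
  show "theta_series j (1/2) t 0 = 0"
    using theta_series_uminus[of j "1/2" t 0] theta_series_char_shift[of j "- 1/2" 1 t 0] assms by simp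
  show "theta_series j 0 t 0 = 0"
    using theta_series_uminus[of j 0 t 0] assms by simp
  have "theta_series j 0 t (1/2 - 1) = - theta_series j 0 t (1/2)"
    using theta_series_uminus[of j 0 t "1/2"] assms by simp
  then show "theta_series j 0 t (1/2) = 0" unfolding theta_series_unit_shifts by simp
qed

lemma jtheta_eq_0:
  "even j \<Longrightarrow> jtheta1 j t 0 = 0"
  "odd j \<Longrightarrow> jtheta2 j t 0 = 0"
  "odd j \<Longrightarrow> jtheta3 j t 0 = 0"
  "odd j \<Longrightarrow> jtheta4 j t 0 = 0"
  by (simp_all add: jtheta1_def jtheta2_def jtheta3_def jtheta4_def
                    theta_series_half_half_eq_0 theta_series_odd_eq_0)

text \<open>Differentiating an addition formula in \<open>y\<close> at \<open>y = 0\<close>.\<close>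

lemma wronskian_of_addition_formula:
  fixes fa fj fk fl da dj dk dl :: "complex \<Rightarrow> complex" and \<kappa> :: complex
  assumes Da: "\<And>z. (fa has_field_derivative da z) (at z)"
      and Dj: "\<And>z. (fj has_field_derivative dj z) (at z)"
      and Dk: "\<And>z. (fk has_field_derivative dk z) (at z)"
      and Dl: "\<And>z. (fl has_field_derivative dl z) (at z)"
      and addition: "\<And>x y. fj (x + y) * fa (x - y) * \<kappa> = fa x * fj x * (fk y * fl y) - fk x * fl x * (fa y * fj y)"
      and zeros: "fa 0 = 0" "dk 0 = 0" "dl 0 = 0"
  shows "\<kappa> * (dj x * fa x - fj x * da x) = - (da 0 * fj 0) * (fk x * fl x)"
proof -
  have "((\<lambda>y. x + y) has_field_derivative 1) (at 0)" "((\<lambda>y. x - y) has_field_derivative -1) (at 0)"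
    by (auto intro!: derivative_eq_intros)
  from DERIV_chain2[OF Dj this(1)] DERIV_chain2[OF Da this(2)]
  have "((\<lambda>y. fj (x + y) * fa (x - y) * \<kappa>) has_field_derivative (dj x * 1 * fa (x - 0) + da x * -1 * fj (x + 0)) * \<kappa>) (at 0)"
    by (intro DERIV_cmult_right DERIV_mult) simp_all
  moreover have "((\<lambda>y. fa x * fj x * (fk y * fl y) - fk x * fl x * (fa y * fj y)) has_field_derivative
      fa x * fj x * (dk 0 * fl 0 + dl 0 * fk 0) - fk x * fl x * (da 0 * fj 0 + dj 0 * fa 0)) (at 0)"
    by (intro DERIV_diff DERIV_cmult DERIV_mult Dk Dl Da Dj)
  ultimately have "(dj x * 1 * fa (x - 0) + da x * -1 * fj (x + 0)) * \<kappa> =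
      fa x * fj x * (dk 0 * fl 0 + dl 0 * fk 0) - fk x * fl x * (da 0 * fj 0 + dj 0 * fa 0)"
    using DERIV_unique addition by (metis (no_types, lifting) ext)
  then show ?thesis using zeros by (simp add: algebra_simps)
qed

lemma wronskian_identity_second_derivative:
  fixes fa fj fk fl da dj dk dl ea ej ek el ga gj :: "complex \<Rightarrow> complex" and \<kappa> c :: complex
  assumes Da: "\<And>z. (fa has_field_derivative da z) (at z)" "\<And>z. (da has_field_derivative ea z) (at z)"
              "\<And>z. (ea has_field_derivative ga z) (at z)"
      and Dj: "\<And>z. (fj has_field_derivative dj z) (at z)" "\<And>z. (dj has_field_derivative ej z) (at z)"
              "\<And>z. (ej has_field_derivative gj z) (at z)"
      and Dk: "\<And>z. (fk has_field_derivative dk z) (at z)" "\<And>z. (dk has_field_derivative ek z) (at z)"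
      and Dl: "\<And>z. (fl has_field_derivative dl z) (at z)" "\<And>z. (dl has_field_derivative el z) (at z)"
      and wronskian: "\<And>x. \<kappa> * (dj x * fa x - fj x * da x) = c * (fk x * fl x)"
      and zeros: "fa 0 = 0" "ea 0 = 0" "dj 0 = 0" "dk 0 = 0" "dl 0 = 0"
  shows "\<kappa> * (ej 0 * da 0 - fj 0 * ga 0) = c * (ek 0 * fl 0 + fk 0 * el 0)"
proof -
  have first: "\<kappa> * (ej x * fa x - fj x * ea x) = c * (dk x * fl x + fk x * dl x)" for x
  proof -
    have "((\<lambda>x. \<kappa> * (dj x * fa x - fj x * da x)) has_field_derivative
            \<kappa> * ((ej x * fa x + da x * dj x) - (dj x * da x + ea x * fj x))) (at x)"
      by (intro DERIV_cmult DERIV_diff DERIV_mult Da Dj)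
    moreover have "((\<lambda>x. c * (fk x * fl x)) has_field_derivative c * (dk x * fl x + dl x * fk x)) (at x)"
      by (intro DERIV_cmult DERIV_mult Dk Dl)
    ultimately have "\<kappa> * ((ej x * fa x + da x * dj x) - (dj x * da x + ea x * fj x)) = c * (dk x * fl x + dl x * fk x)"
      using DERIV_unique wronskian by (metis (no_types, lifting) ext)
    then show ?thesis by (simp add: algebra_simps)
  qed
  have "((\<lambda>x. \<kappa> * (ej x * fa x - fj x * ea x)) has_field_derivative
          \<kappa> * ((gj 0 * fa 0 + da 0 * ej 0) - (dj 0 * ea 0 + ga 0 * fj 0))) (at 0)"
    by (intro DERIV_cmult DERIV_diff DERIV_mult Da Dj)
  moreover have "((\<lambda>x. c * (dk x * fl x + fk x * dl x)) has_field_derivative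
                   c * ((ek 0 * fl 0 + dl 0 * dk 0) + (dk 0 * dl 0 + el 0 * fk 0))) (at 0)"
    by (intro DERIV_cmult DERIV_add DERIV_mult Dk Dl)
  ultimately have "\<kappa> * ((gj 0 * fa 0 + da 0 * ej 0) - (dj 0 * ea 0 + ga 0 * fj 0)) =
                   c * ((ek 0 * fl 0 + dl 0 * dk 0) + (dk 0 * dl 0 + el 0 * fk 0))"
    using DERIV_unique first by (metis (no_types, lifting) ext)
  then show ?thesis using zeros by (simp add: algebra_simps)
qed

lemma jtheta_wronskians_unnormalized:
  assumes t: "Im t > 0"
  shows "jtheta2 0 t 0 * jtheta4 0 t 0 * (jtheta3 1 t x * jtheta1 0 t x - jtheta3 0 t x * jtheta1 1 t x) =
           - (jtheta1 1 t 0 * jtheta3 0 t 0) * (jtheta2 0 t x * jtheta4 0 t x)"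
    and "jtheta3 0 t 0 * jtheta4 0 t 0 * (jtheta2 1 t x * jtheta1 0 t x - jtheta2 0 t x * jtheta1 1 t x) =
           - (jtheta1 1 t 0 * jtheta2 0 t 0) * (jtheta3 0 t x * jtheta4 0 t x)"
    and "jtheta2 0 t 0 * jtheta3 0 t 0 * (jtheta4 1 t x * jtheta1 0 t x - jtheta4 0 t x * jtheta1 1 t x) =
           - (jtheta1 1 t 0 * jtheta4 0 t 0) * (jtheta2 0 t x * jtheta3 0 t x)"
proof -
  show "jtheta2 0 t 0 * jtheta4 0 t 0 * (jtheta3 1 t x * jtheta1 0 t x - jtheta3 0 t x * jtheta1 1 t x) =
          - (jtheta1 1 t 0 * jtheta3 0 t 0) * (jtheta2 0 t x * jtheta4 0 t x)"
    by (rule wronskian_of_addition_formula[where fa="jtheta1 0 t" and da="jtheta1 1 t" and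
          fj="jtheta3 0 t" and dj="jtheta3 1 t" and fk="jtheta2 0 t" and dk="jtheta2 1 t" and
          fl="jtheta4 0 t" and dl="jtheta4 1 t"])
       (use jtheta3_addition[OF t] jtheta_has_derivative[OF t] in \<open>simp_all add: jtheta_eq_0\<close>)
  show "jtheta3 0 t 0 * jtheta4 0 t 0 * (jtheta2 1 t x * jtheta1 0 t x - jtheta2 0 t x * jtheta1 1 t x) =
          - (jtheta1 1 t 0 * jtheta2 0 t 0) * (jtheta3 0 t x * jtheta4 0 t x)"
    by (rule wronskian_of_addition_formula[where fa="jtheta1 0 t" and da="jtheta1 1 t" and
          fj="jtheta2 0 t" and dj="jtheta2 1 t" and fk="jtheta3 0 t" and dk="jtheta3 1 t" and
          fl="jtheta4 0 t" and dl="jtheta4 1 t"])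
       (use jtheta2_addition[OF t] jtheta_has_derivative[OF t] in \<open>simp_all add: jtheta_eq_0\<close>)
  show "jtheta2 0 t 0 * jtheta3 0 t 0 * (jtheta4 1 t x * jtheta1 0 t x - jtheta4 0 t x * jtheta1 1 t x) =
          - (jtheta1 1 t 0 * jtheta4 0 t 0) * (jtheta2 0 t x * jtheta3 0 t x)"
    by (rule wronskian_of_addition_formula[where fa="jtheta1 0 t" and da="jtheta1 1 t" and
          fj="jtheta4 0 t" and dj="jtheta4 1 t" and fk="jtheta2 0 t" and dk="jtheta2 1 t" and
          fl="jtheta3 0 t" and dl="jtheta3 1 t"])
       (use jtheta4_addition[OF t] jtheta_has_derivative[OF t] in \<open>simp_all add: jtheta_eq_0\<close>)
qed

lemma jtheta1_third_derivative_at_0: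
  assumes t: "Im t > 0"
  shows "jtheta1 3 t 0 * (jtheta2 0 t 0 * jtheta3 0 t 0 * jtheta4 0 t 0) =
         jtheta1 1 t 0 * (jtheta2 2 t 0 * jtheta3 0 t 0 * jtheta4 0 t 0 + jtheta2 0 t 0 * jtheta3 2 t 0 * jtheta4 0 t 0
                          + jtheta2 0 t 0 * jtheta3 0 t 0 * jtheta4 2 t 0)"
proof -
  have "(jtheta2 0 t 0 * jtheta4 0 t 0) * (jtheta3 2 t 0 * jtheta1 1 t 0 - jtheta3 0 t 0 * jtheta1 3 t 0) =
        - (jtheta1 1 t 0 * jtheta3 0 t 0) * (jtheta2 2 t 0 * jtheta4 0 t 0 + jtheta2 0 t 0 * jtheta4 2 t 0)"
    by (rule wronskian_identity_second_derivative[where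
          fa="jtheta1 0 t" and da="jtheta1 1 t" and ea="jtheta1 2 t" and ga="jtheta1 3 t" and
          fj="jtheta3 0 t" and dj="jtheta3 1 t" and ej="jtheta3 2 t" and gj="jtheta3 3 t" and
          fk="jtheta2 0 t" and dk="jtheta2 1 t" and ek="jtheta2 2 t" and
          fl="jtheta4 0 t" and dl="jtheta4 1 t" and el="jtheta4 2 t"])
       (use jtheta_wronskians_unnormalized(1)[OF t] jtheta_has_derivative[OF t] in
        \<open>simp_all add: jtheta_eq_0 numeral_eq_Suc\<close>)
  then show ?thesis by (simp add: algebra_simps)
qed

section \<open>Jacobi's derivative formula\<close>

text \<open>On the imaginary axis \<open>t = i s\<close>, \<open>s \<rightarrow> \<infinity>\<close>, only the terms with minimal \<open>(k + c)\<^sup>2\<close> survive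
  after rescaling; they are dominated for \<open>s \<ge> 1\<close> by the terms at \<open>s = 1\<close>.\<close>

lemma theta_series_tendsto_imag_axis:
  fixes c w :: real
  assumes min: "\<And>k::int. (of_int k + c)\<^sup>2 \<ge> c\<^sup>2"
  shows "((\<lambda>s. exp (of_real (pi * c\<^sup>2 * s)) * theta_series n c (\<i> * of_real s) (of_real w)) \<longlongrightarrow>
           (\<Sum>\<^sub>\<infinity>k. if (of_int k + c)\<^sup>2 = c\<^sup>2
                  then theta_weight n c k * exp (2 * of_real pi * \<i> * of_real (of_int k + c) * of_real w)
                  else 0)) at_top"
proof -
  define d where "d k = (of_int k + c)\<^sup>2 - c\<^sup>2" for k :: int
  define E where "E k = exp (2 * of_real pi * \<i> * of_real (of_int k + c) * of_real w)" for k :: int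
  define g where "g k s = theta_weight n c k * (of_real (exp (- pi * d k * s)) * E k)" for k s
  define M where "M k = norm (theta_weight n c k) * exp (- pi * d k)" for k
  have d_nonneg: "d k \<ge> 0" for k using min[of k] unfolding d_def by simp
  have norm_E: "norm (E k) = 1" for k unfolding E_def by (simp add: norm_exp_eq_Re)
  have rescaled_term: "exp (of_real (pi * c\<^sup>2 * s)) * theta_term c (\<i> * of_real s) (of_real w) k =
                       of_real (exp (- pi * d k * s)) * E k" for k s
  proof -
    have "exp (of_real (pi * c\<^sup>2 * s)) * theta_term c (\<i> * of_real s) (of_real w) k =
          exp (of_real (- pi * d k * s) + 2 * of_real pi * \<i> * of_real (of_int k + c) * of_real w)"
      unfolding theta_term_def exp_add[symmetric] d_def
      by (rule arg_cong[where f=exp]) (simp add: algebra_simps power2_eq_square)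
    then show ?thesis unfolding exp_add exp_of_real E_def .
  qed
  have "exp (of_real (pi * c\<^sup>2 * s)) * theta_series n c (\<i> * of_real s) (of_real w) = (\<Sum>\<^sub>\<infinity>k. g k s)" for s
    unfolding theta_series_def infsum_cmult_right'[symmetric]
    by (rule infsum_cong) (simp only: g_def rescaled_term mult.left_commute[of "exp (of_real (pi * c\<^sup>2 * s))"])
  moreover have "((\<lambda>s. \<Sum>\<^sub>\<infinity>k. g k s) \<longlongrightarrow> (\<Sum>\<^sub>\<infinity>k. if d k = 0 then theta_weight n c k * E k else 0)) at_top"
  proof (rule tendsto_infsum_dominated)
    have "(\<lambda>k. norm (theta_weight n c k * theta_term c \<i> 0 k) * exp (pi * c\<^sup>2)) summable_on UNIV"
      using summable_on_theta_terms[of \<i> n c 0]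
      by (intro summable_on_cmult_left) (simp add: summable_on_iff_abs_summable_on_complex)
    moreover have "norm (theta_weight n c k * theta_term c \<i> 0 k) * exp (pi * c\<^sup>2) = M k" for k
    proof -
      have "theta_term c \<i> 0 k = of_real (exp (- pi * (of_int k + c)\<^sup>2))"
        unfolding theta_term_def exp_of_real[symmetric] by (rule arg_cong[where f=exp]) (simp add: algebra_simps)
      then show ?thesis unfolding M_def d_def norm_mult by (simp add: exp_add[symmetric] algebra_simps)
    qed
    ultimately show "M summable_on UNIV" by simp
  next
    fix k and s :: real
    assume "s \<ge> 1"
    then have "d k * 1 \<le> d k * s" using d_nonneg[of k] by (intro mult_left_mono) auto
    then have "exp (- pi * d k * s) \<le> exp (- pi * d k)" by (simp add: mult_left_mono)
    then show "norm (g k s) \<le> M k" unfolding g_def M_def norm_mult norm_E by (simp add: mult_left_mono)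
  next
    fix k
    show "((\<lambda>s. g k s) \<longlongrightarrow> (if d k = 0 then theta_weight n c k * E k else 0)) at_top"
    proof (cases "d k = 0")
      case True
      then show ?thesis unfolding g_def by simp
    next
      case False
      then have "filterlim (\<lambda>s. (- pi * d k) * s) at_bot at_top"
        using d_nonneg[of k]
        by (intro filterlim_tendsto_neg_mult_at_bot[OF tendsto_const]) (auto simp: filterlim_ident)
      then have "((\<lambda>s. exp (- pi * d k * s)) \<longlongrightarrow> 0) at_top"
        using filterlim_compose[OF exp_at_bot] by (simp add: o_def)
      then have "((\<lambda>s. theta_weight n c k * (of_real (exp (- pi * d k * s)) * E k)) \<longlongrightarrow>
                  theta_weight n c k * (of_real 0 * E k)) at_top"
        by (intro tendsto_intros) auto
      then show ?thesis unfolding g_def using False by simp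
    qed
  qed
  ultimately show ?thesis unfolding d_def E_def by simp
qed

lemma jtheta_tendsto_imag_axis:
  "((\<lambda>s. exp (of_real (pi * (1/2)\<^sup>2 * s)) * jtheta1 1 (\<i> * of_real s) 0) \<longlongrightarrow> 2 * of_real pi) at_top"
  "((\<lambda>s. exp (of_real (pi * (1/2)\<^sup>2 * s)) * jtheta2 0 (\<i> * of_real s) 0) \<longlongrightarrow> 2) at_top"
  "((\<lambda>s. jtheta3 0 (\<i> * of_real s) 0) \<longlongrightarrow> 1) at_top"
  "((\<lambda>s. jtheta4 0 (\<i> * of_real s) 0) \<longlongrightarrow> 1) at_top"
proof -
  have half_sq: "(real_of_int k + 1/2)\<^sup>2 = (1/2)\<^sup>2 + real_of_int (k * (k + 1))" for k
    by (simp add: power2_eq_square algebra_simps)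
  have "k * (k + 1) \<ge> 0" for k :: int
    by (cases "k \<ge> 0") (auto simp: zero_le_mult_iff)
  then have half_min: "(real_of_int k + 1/2)\<^sup>2 \<ge> (1/2)\<^sup>2" for k
    unfolding half_sq by (simp del: of_int_mult)
  have half_eq: "(real_of_int k + 1/2)\<^sup>2 = (1/2)\<^sup>2 \<longleftrightarrow> k = 0 \<or> k = -1" for k
    unfolding half_sq by (simp del: of_int_mult) (simp add: mult_eq_0_iff add_eq_0_iff)
  have half_sum: "(\<Sum>\<^sub>\<infinity>k. if (real_of_int k + 1/2)\<^sup>2 = (1/2)\<^sup>2 then F k else 0) = F 0 + F (-1)"
    for F :: "int \<Rightarrow> complex"
  proof -
    have "(\<Sum>\<^sub>\<infinity>k. if (real_of_int k + 1/2)\<^sup>2 = (1/2)\<^sup>2 then F k else 0) = (\<Sum>\<^sub>\<infinity>k\<in>{0, -1}. F k)"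
      by (rule infsum_cong_neutral) (auto simp: half_eq)
    then show ?thesis by simp
  qed
  have zero_sum: "(\<Sum>\<^sub>\<infinity>k. if (real_of_int k + 0)\<^sup>2 = 0\<^sup>2 then F k else 0) = F 0" for F :: "int \<Rightarrow> complex"
  proof -
    have "(\<Sum>\<^sub>\<infinity>k. if (real_of_int k + 0)\<^sup>2 = 0\<^sup>2 then F k else 0) = (\<Sum>\<^sub>\<infinity>k\<in>{0}. F k)"
      by (rule infsum_cong_neutral) auto
    then show ?thesis by simp
  qed
  have "exp (2 * of_real pi * \<i> * of_real (of_int 0 + 1/2) * of_real (1/2)) = \<i>"
       "exp (2 * of_real pi * \<i> * of_real (of_int (-1) + 1/2) * of_real (1/2)) = - \<i>"
    using exp_i_pi_half exp_minus[of "\<i> * of_real (pi / 2)"] by (simp_all add: mult_ac)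
  then have "((\<lambda>s. exp (of_real (pi * (1/2)\<^sup>2 * s)) * theta_series 1 (1/2) (\<i> * of_real s) (of_real (1/2)))
              \<longlongrightarrow> - 2 * of_real pi) at_top"
    using theta_series_tendsto_imag_axis[of "1/2" 1 "1/2"] half_min
    unfolding half_sum by (simp add: theta_weight_def algebra_simps)
  from tendsto_minus[OF this]
  show "((\<lambda>s. exp (of_real (pi * (1/2)\<^sup>2 * s)) * jtheta1 1 (\<i> * of_real s) 0) \<longlongrightarrow> 2 * of_real pi) at_top"
    by (simp add: jtheta1_def)
  show "((\<lambda>s. exp (of_real (pi * (1/2)\<^sup>2 * s)) * jtheta2 0 (\<i> * of_real s) 0) \<longlongrightarrow> 2) at_top"
    using theta_series_tendsto_imag_axis[of "1/2" 0 0] half_min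
    unfolding half_sum by (simp add: jtheta2_def theta_weight_def)
  show "((\<lambda>s. jtheta3 0 (\<i> * of_real s) 0) \<longlongrightarrow> 1) at_top"
       "((\<lambda>s. jtheta4 0 (\<i> * of_real s) 0) \<longlongrightarrow> 1) at_top"
    using theta_series_tendsto_imag_axis[of 0 0 0] theta_series_tendsto_imag_axis[of 0 0 "1/2"]
    unfolding zero_sum by (simp_all add: jtheta3_def jtheta4_def theta_weight_def)
qed

lemma jtheta_has_derivative_t:
  assumes "Im t > 0"
  shows "((\<lambda>t. jtheta1 j t z) has_field_derivative jtheta1 (Suc (Suc j)) t z / (4 * of_real pi * \<i>)) (at t)"
    and "((\<lambda>t. jtheta2 j t z) has_field_derivative jtheta2 (Suc (Suc j)) t z / (4 * of_real pi * \<i>)) (at t)"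
    and "((\<lambda>t. jtheta3 j t z) has_field_derivative jtheta3 (Suc (Suc j)) t z / (4 * of_real pi * \<i>)) (at t)"
    and "((\<lambda>t. jtheta4 j t z) has_field_derivative jtheta4 (Suc (Suc j)) t z / (4 * of_real pi * \<i>)) (at t)"
  using DERIV_minus[OF theta_series_has_derivative_t[OF assms, of j "1/2" "z + 1/2"]]
    theta_series_has_derivative_t[OF assms]
  by (simp_all add: jtheta1_def jtheta2_def jtheta3_def jtheta4_def)

lemma jtheta_constants_has_derivative_t:
  assumes "Im t > 0"
  shows "((\<lambda>t. jtheta2 0 t 0 * jtheta3 0 t 0 * jtheta4 0 t 0) has_field_derivative
           (jtheta2 2 t 0 * jtheta3 0 t 0 * jtheta4 0 t 0 + jtheta2 0 t 0 * jtheta3 2 t 0 * jtheta4 0 t 0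
            + jtheta2 0 t 0 * jtheta3 0 t 0 * jtheta4 2 t 0) / (4 * of_real pi * \<i>)) (at t)"
proof -
  note D = jtheta_has_derivative_t[OF assms, of 0 0, folded numeral_2_eq_2]
  have "((\<lambda>t. jtheta2 0 t 0 * jtheta3 0 t 0 * jtheta4 0 t 0) has_field_derivative
          (jtheta2 2 t 0 / (4 * of_real pi * \<i>) * jtheta3 0 t 0 + jtheta3 2 t 0 / (4 * of_real pi * \<i>) * jtheta2 0 t 0)
            * jtheta4 0 t 0 + jtheta4 2 t 0 / (4 * of_real pi * \<i>) * (jtheta2 0 t 0 * jtheta3 0 t 0)) (at t)"
    by (intro DERIV_mult D)
  then show ?thesis by (simp add: field_simps)
qed

lemma jtheta_holomorphic:
  "(\<lambda>t. jtheta1 j t z) holomorphic_on {t. Im t > 0}" "(\<lambda>t. jtheta2 j t z) holomorphic_on {t. Im t > 0}"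
  "(\<lambda>t. jtheta3 j t z) holomorphic_on {t. Im t > 0}" "(\<lambda>t. jtheta4 j t z) holomorphic_on {t. Im t > 0}"
  using jtheta_has_derivative_t by (simp_all add: holomorphic_on_open open_halfspace_Im_gt) blast+

lemma jtheta_constants_tendsto_imag_axis:
  "((\<lambda>s. exp (of_real (pi * (1/2)\<^sup>2 * s)) *
          (jtheta2 0 (\<i> * of_real s) 0 * jtheta3 0 (\<i> * of_real s) 0 * jtheta4 0 (\<i> * of_real s) 0))
     \<longlongrightarrow> 2) at_top"
  using tendsto_mult[OF tendsto_mult[OF jtheta_tendsto_imag_axis(2,3)] jtheta_tendsto_imag_axis(4)]
  by (simp add: mult_ac)

lemma jtheta_constants_nonzero:
  obtains t0 where "Im t0 > 0" "jtheta2 0 t0 0 * jtheta3 0 t0 0 * jtheta4 0 t0 0 \<noteq> 0"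
proof -
  have "\<forall>\<^sub>F s in at_top. exp (of_real (pi * (1/2)\<^sup>2 * s)) *
          (jtheta2 0 (\<i> * of_real s) 0 * jtheta3 0 (\<i> * of_real s) 0 * jtheta4 0 (\<i> * of_real s) 0) \<noteq> 0"
    by (rule tendsto_imp_eventually_ne[OF jtheta_constants_tendsto_imag_axis]) simp
  moreover have "\<forall>\<^sub>F s in at_top. (s::real) > 0" by (rule eventually_gt_at_top)
  ultimately have "\<forall>\<^sub>F s in at_top. s > 0 \<and> exp (of_real (pi * (1/2)\<^sup>2 * s)) *
          (jtheta2 0 (\<i> * of_real s) 0 * jtheta3 0 (\<i> * of_real s) 0 * jtheta4 0 (\<i> * of_real s) 0) \<noteq> 0"
    by eventually_elim auto
  then obtain s where "s > 0" "exp (of_real (pi * (1/2)\<^sup>2 * s)) *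
          (jtheta2 0 (\<i> * of_real s) 0 * jtheta3 0 (\<i> * of_real s) 0 * jtheta4 0 (\<i> * of_real s) 0) \<noteq> 0"
    unfolding eventually_at_top_linorder by auto
  then show ?thesis by (intro that[of "\<i> * of_real s"]) auto
qed

theorem jacobi_derivative_formula:
  assumes "Im t > 0"
  shows "jtheta1 1 t 0 = pi * (jtheta2 0 t 0 * jtheta3 0 t 0 * jtheta4 0 t 0)"
proof -
  define H where "H = {t. Im t > 0}"
  define P where "P t = jtheta2 0 t 0 * jtheta3 0 t 0 * jtheta4 0 t 0" for t
  define P' where "P' t = (jtheta2 2 t 0 * jtheta3 0 t 0 * jtheta4 0 t 0 + jtheta2 0 t 0 * jtheta3 2 t 0 * jtheta4 0 t 0
                           + jtheta2 0 t 0 * jtheta3 0 t 0 * jtheta4 2 t 0) / (4 * of_real pi * \<i>)" for t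
  obtain t0 where t0: "t0 \<in> H" "P t0 \<noteq> 0"
    using jtheta_constants_nonzero unfolding H_def P_def by blast
  obtain c where c: "\<And>t. t \<in> H \<Longrightarrow> jtheta1 1 t 0 = c * P t"
  proof (rule proportional_of_wronskian_eq_0[of H "\<lambda>t. jtheta1 1 t 0" "\<lambda>t. jtheta1 3 t 0 / (4 * of_real pi * \<i>)" P P'])
    show "open H" "connected H" unfolding H_def by (auto simp: open_halfspace_Im_gt)
    fix t assume "t \<in> H"
    then have t: "Im t > 0" unfolding H_def by simp
    show "((\<lambda>t. jtheta1 1 t 0) has_field_derivative jtheta1 3 t 0 / (4 * of_real pi * \<i>)) (at t)"
      using jtheta_has_derivative_t(1)[OF t, of 1 0] by (simp add: numeral_3_eq_3)
    show "(P has_field_derivative P' t) (at t)"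
      unfolding P_def[abs_def] P'_def by (rule jtheta_constants_has_derivative_t[OF t])
    show "jtheta1 3 t 0 / (4 * of_real pi * \<i>) * P t = jtheta1 1 t 0 * P' t"
      using jtheta1_third_derivative_at_0[OF t] unfolding P_def P'_def by (simp add: field_simps)
  qed (use t0 in auto)
  define e where "e s = exp (of_real (pi * (1/2)\<^sup>2 * s) :: complex)" for s :: real
  have "((\<lambda>s. c * (e s * P (\<i> * of_real s))) \<longlongrightarrow> c * 2) at_top"
    unfolding P_def e_def by (intro tendsto_mult_left jtheta_constants_tendsto_imag_axis)
  moreover have "\<forall>\<^sub>F s in at_top. c * (e s * P (\<i> * of_real s)) = e s * jtheta1 1 (\<i> * of_real s) 0"
    using eventually_gt_at_top[of "0::real"]
  proof eventually_elim
    case (elim s)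
    then have "\<i> * of_real s \<in> H" by (simp add: H_def)
    from c[OF this] show ?case by (simp add: mult_ac)
  qed
  ultimately have "((\<lambda>s. e s * jtheta1 1 (\<i> * of_real s) 0) \<longlongrightarrow> c * 2) at_top"
    by (rule Lim_transform_eventually)
  then have "c * 2 = 2 * of_real pi"
    using jtheta_tendsto_imag_axis(1)[folded e_def] by (rule tendsto_unique[rotated]) simp
  then show ?thesis using c[of t] assms unfolding H_def P_def by simp
qed

lemma jtheta_wronskians:
  assumes t: "Im t > 0"
  shows "jtheta3 1 t x * jtheta1 0 t x - jtheta3 0 t x * jtheta1 1 t x =
           - pi * (jtheta3 0 t 0)\<^sup>2 * (jtheta2 0 t x * jtheta4 0 t x)"
    and "jtheta2 1 t x * jtheta1 0 t x - jtheta2 0 t x * jtheta1 1 t x =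
           - pi * (jtheta2 0 t 0)\<^sup>2 * (jtheta3 0 t x * jtheta4 0 t x)"
    and "jtheta4 1 t x * jtheta1 0 t x - jtheta4 0 t x * jtheta1 1 t x =
           - pi * (jtheta4 0 t 0)\<^sup>2 * (jtheta2 0 t x * jtheta3 0 t x)"
proof -
  define H where "H = {t. Im t > 0}"
  have H: "open H" "connected H" "t \<in> H" unfolding H_def using t by (auto simp: open_halfspace_Im_gt)
  obtain t0 where t0: "t0 \<in> H" "jtheta2 0 t0 0 * jtheta3 0 t0 0 * jtheta4 0 t0 0 \<noteq> 0"
    using jtheta_constants_nonzero unfolding H_def by blast
  have cancel: "W t = V t"
    if "\<And>s. Im s > 0 \<Longrightarrow> h s * W s = h s * V s" "h t0 \<noteq> 0"
      and "W holomorphic_on H" "V holomorphic_on H" "h holomorphic_on H" for W V h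
  proof -
    have "W t - V t = 0"
      by (rule holomorphic_eq_0_of_mult_eq_0[of H _ h t0])
         (use H t0 that in \<open>auto simp: H_def right_diff_distrib intro: holomorphic_intros\<close>)
    then show ?thesis by simp
  qed
  show "jtheta3 1 t x * jtheta1 0 t x - jtheta3 0 t x * jtheta1 1 t x =
          - pi * (jtheta3 0 t 0)\<^sup>2 * (jtheta2 0 t x * jtheta4 0 t x)"
    apply (rule cancel[where h="\<lambda>t. jtheta2 0 t 0 * jtheta4 0 t 0"])
    subgoal for s using jtheta_wronskians_unnormalized(1)[of s x] jacobi_derivative_formula[of s]
      by (simp add: power2_eq_square algebra_simps)
    using t0 by (auto simp: H_def intro!: holomorphic_intros jtheta_holomorphic)
  show "jtheta2 1 t x * jtheta1 0 t x - jtheta2 0 t x * jtheta1 1 t x =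
          - pi * (jtheta2 0 t 0)\<^sup>2 * (jtheta3 0 t x * jtheta4 0 t x)"
    apply (rule cancel[where h="\<lambda>t. jtheta3 0 t 0 * jtheta4 0 t 0"])
    subgoal for s using jtheta_wronskians_unnormalized(2)[of s x] jacobi_derivative_formula[of s]
      by (simp add: power2_eq_square algebra_simps)
    using t0 by (auto simp: H_def intro!: holomorphic_intros jtheta_holomorphic)
  show "jtheta4 1 t x * jtheta1 0 t x - jtheta4 0 t x * jtheta1 1 t x =
          - pi * (jtheta4 0 t 0)\<^sup>2 * (jtheta2 0 t x * jtheta3 0 t x)"
    apply (rule cancel[where h="\<lambda>t. jtheta2 0 t 0 * jtheta3 0 t 0"])
    subgoal for s using jtheta_wronskians_unnormalized(3)[of s x] jacobi_derivative_formula[of s]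
      by (simp add: power2_eq_square algebra_simps)
    using t0 by (auto simp: H_def intro!: holomorphic_intros jtheta_holomorphic)
qed

section \<open>Theta functions with characteristics\<close>

lemma of_int_div_mod_2: "(of_int k :: 'a::ring_1) = 2 * of_int (k div 2) + of_int (k mod 2)"
  by (metis div_mult_mod_eq mult.commute of_int_add of_int_mult of_int_numeral)

lemma exp_pi_i_int: "exp (of_real pi * \<i> * of_int k) = (-1) ^ nat (k mod 2)"
proof -
  have "of_real pi * \<i> * of_int k = of_real pi * \<i> * of_int (k mod 2) + \<i> * (of_int (k div 2) * (of_real pi * 2))"
    by (subst of_int_div_mod_2[of k]) (simp add: algebra_simps)
  then have "exp (of_real pi * \<i> * of_int k) = exp (of_real pi * \<i> * of_int (k mod 2))"
    by (simp only: exp_plus_2pin)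
  moreover have "k mod 2 = 0 \<or> k mod 2 = 1" by presburger
  ultimately show ?thesis by auto
qed

lemma theta_series_char_mod_2:
  "theta_series j (of_int a / 2) t (w + of_int b / 2) =
     (-1) ^ nat ((a * (b div 2)) mod 2) * theta_series j (of_int (a mod 2) / 2) t (w + of_int (b mod 2) / 2)"
proof -
  have a: "of_int a / 2 = of_int (a mod 2) / 2 + (of_int (a div 2) :: real)"
    by (subst of_int_div_mod_2[of a]) (simp add: field_simps)
  have b: "w + of_int b / 2 = (w + of_int (b mod 2) / 2) + of_int (b div 2)"
    by (subst of_int_div_mod_2[of b]) (simp add: field_simps)
  have sign: "exp (2 * of_real pi * \<i> * of_real (of_int (a mod 2) / 2) * of_int (b div 2)) =
              ((-1) ^ nat ((a * (b div 2)) mod 2) :: complex)"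
    using exp_pi_i_int[of "a mod 2 * (b div 2)"] mod_mult_left_eq[of a 2 "b div 2"] by (simp add: mult_ac)
  have "theta_series j (of_int a / 2) t (w + of_int b / 2) =
        theta_series j (of_int (a mod 2) / 2) t ((w + of_int (b mod 2) / 2) + of_int (b div 2))"
    unfolding a b theta_series_char_shift ..
  also have "\<dots> = (-1) ^ nat ((a * (b div 2)) mod 2) * theta_series j (of_int (a mod 2) / 2) t (w + of_int (b mod 2) / 2)"
    unfolding theta_series_int_shift sign ..
  finally show ?thesis .
qed

lemma theta_series_wronskian_char_01:
  assumes t: "Im t > 0" and ab: "a \<in> {0, 1}" "b \<in> {0, 1}"
  shows "theta_series 1 (of_int a / 2) t (z + of_int b / 2) * jtheta1 0 t z
           - jtheta1 1 t z * theta_series 0 (of_int a / 2) t (z + of_int b / 2) =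
         - pi * (theta_series 0 (of_int a / 2) t (of_int b / 2))\<^sup>2
           * theta_series 0 (of_int (a - 1) / 2) t z * theta_series 0 0 t (z + of_int (b - 1) / 2)"
proof -
  have "theta_series j (- 1/2) t w = theta_series j (1/2) t w" for j w
    using theta_series_char_shift[of j "- 1/2" 1 t w] by simp
  moreover have "theta_series j 0 t (z + - 1/2) = theta_series j 0 t (z + 1/2)" for j
    using theta_series_unit_shifts(6)[of j t "z + 1/2"] by (simp add: algebra_simps)
  ultimately show ?thesis
    using ab jtheta_wronskians[OF t, of z] theta_series_half_half_eq_0[of 0 t]
    by (auto simp: jtheta1_def jtheta2_def jtheta3_def jtheta4_def algebra_simps)
qed

lemma theta_char_eq: "theta_char a b z t = theta_series 0 (of_int a / 2) t (z + of_int b / 2)"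
  unfolding theta_char_def theta_series_0 theta_term_def by simp

lemma theta_char'_eq:
  assumes "Im t > 0"
  shows "theta_char' a b z t = theta_series 1 (of_int a / 2) t (z + of_int b / 2)"
proof -
  have "((\<lambda>z. theta_series 0 (of_int a / 2) t (z + of_int b / 2)) has_field_derivative
          theta_series 1 (of_int a / 2) t (z + of_int b / 2)) (at z)"
    using DERIV_shift theta_series_has_derivative_w[OF assms] by fastforce
  then show ?thesis unfolding theta_char'_def theta_char_eq by (rule DERIV_imp_deriv)
qed

lemma theta_null_eq: "theta_null a b t = theta_series 0 (of_int a / 2) t (of_int b / 2)"
  unfolding theta_null_def theta_char_eq by simp

lemma theta1_eq: "theta1 z t = jtheta1 0 t z"
  unfolding theta1_def theta_char_eq jtheta1_def by simp

lemma theta1'_eq: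
  assumes "Im t > 0"
  shows "theta1' z t = jtheta1 1 t z"
proof -
  have "(\<lambda>w. theta1 w t) = jtheta1 0 t" by (simp add: fun_eq_iff theta1_eq)
  then show ?thesis unfolding theta1'_def using DERIV_imp_deriv[OF jtheta_has_derivative(1)[OF assms]] by simp
qed

theorem theta_char_wronskian:
  assumes t: "Im t > 0"
  shows "theta_char' a b z t * theta1 z t - theta1' z t * theta_char a b z t =
    - ((-1) ^ nat ((a * (b div 2)) mod 2) * pi * (theta_null a b t)\<^sup>2
        * theta_char (a - 1) 0 z t * theta_char 0 (b - 1) z t)"
proof -
  define \<epsilon> :: complex where "\<epsilon> = (-1) ^ nat ((a * (b div 2)) mod 2)"
  have \<epsilon>_sq: "\<epsilon>\<^sup>2 = 1" unfolding \<epsilon>_def by (simp add: power_even_eq[symmetric] power_mult)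
  have reduce: "theta_series j (of_int a / 2) t (w + of_int b / 2) =
                \<epsilon> * theta_series j (of_int (a mod 2) / 2) t (w + of_int (b mod 2) / 2)" for j w
    unfolding \<epsilon>_def by (rule theta_series_char_mod_2)
  have "a mod 2 \<in> {0, 1}" "b mod 2 \<in> {0, 1}" by auto
  note wronskian_01 = theta_series_wronskian_char_01[OF t this]
  have shifted_chars: "theta_char (a - 1) 0 z t = theta_char (a mod 2 - 1) 0 z t"
                      "theta_char 0 (b - 1) z t = theta_char 0 (b mod 2 - 1) z t"
    using theta_series_char_mod_2[of 0 "a - 1" t z 0] theta_series_char_mod_2[of 0 "a mod 2 - 1" t z 0]
      theta_series_char_mod_2[of 0 0 t z "b - 1"] theta_series_char_mod_2[of 0 0 t z "b mod 2 - 1"]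
    by (simp_all add: theta_char_eq mod_diff_left_eq)
  show ?thesis
    using arg_cong[where f="\<lambda>x. \<epsilon> * x", OF wronskian_01] reduce[of 1 z] reduce[of 0 z] reduce[of 0 0] \<epsilon>_sq
    unfolding shifted_chars unfolding theta_char'_eq[OF t] theta_char_eq theta_null_eq theta1_eq theta1'_eq[OF t]
    by (simp add: \<epsilon>_def[symmetric] power_mult_distrib algebra_simps)
qed

lemma theta_char'_half_period_shift:
  fixes \<alpha> \<beta> m n :: int
  assumes t: "Im \<tau> > 0"
  shows "theta_char' \<alpha> \<beta> (z + of_int n / 2 + of_int m / 2 * \<tau>) \<tau> =
    \<i> powi (- (m * (\<beta> + n))) * exp (- (1/4) * pi * \<i> * of_int m * (4 * z + of_int m * \<tau>)) *
    (theta_char' (\<alpha> + m) (\<beta> + n) z \<tau> - pi * \<i> * of_int m * theta_char (\<alpha> + m) (\<beta> + n) z \<tau>)"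
proof -
  define b where "b = \<beta> + n"
  have arg: "z + of_int n / 2 + of_int m / 2 * \<tau> + of_int \<beta> / 2 = (z + of_int b / 2) + of_int m * \<tau> / 2"
    unfolding b_def by (simp add: field_simps)
  have char: "of_int \<alpha> / 2 + of_int m / 2 = (of_int (\<alpha> + m) / 2 :: real)"
    by (simp add: field_simps)
  have "\<i> powi (- (m * b)) = exp (of_int (- (m * b)) * (\<i> * of_real (pi / 2)))"
    using exp_power_int[of "\<i> * of_real (pi / 2)" "- (m * b)"] by (simp only: exp_i_pi_half)
  then have "\<i> powi (- (m * b)) * exp (- (1/4) * pi * \<i> * of_int m * (4 * z + of_int m * \<tau>)) =
      exp (of_int (- (m * b)) * (\<i> * of_real (pi / 2)) + - (1/4) * pi * \<i> * of_int m * (4 * z + of_int m * \<tau>))"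
    unfolding exp_add by simp
  also have "\<dots> = exp (- (pi * \<i> * of_int m ^ 2 * \<tau> / 4) - pi * \<i> * of_int m * (z + of_int b / 2))"
    by (rule arg_cong[where f=exp]) (simp add: field_simps power2_eq_square)
  finally show ?thesis
    unfolding b_def[symmetric] theta_char'_eq[OF t] theta_char_eq arg theta_series_1_half_period_shift[OF t] char
    by simp
qed

theorem theorem6p1:
  fixes \<alpha> \<beta> m n :: int and z \<tau> :: complex
  assumes "Im \<tau> > 0" and "theta1 z \<tau> \<noteq> 0"
  shows "theta_char' \<alpha> \<beta> (z + of_int n / 2 + of_int m / 2 * \<tau>) \<tau> =
    \<i> powi (- (m * (\<beta> + n))) * exp (- (1/4) * pi * \<i> * of_int m * (4 * z + of_int m * \<tau>))
      / theta1 z \<tau> *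
    ((theta1' z \<tau> - pi * \<i> * of_int m * theta1 z \<tau>) * theta_char (\<alpha> + m) (\<beta> + n) z \<tau>
     - (-1) ^ nat (((\<alpha> + m) * \<lfloor>of_int (\<beta> + n) / (2::real)\<rfloor>) mod 2) * pi
       * (theta_null (\<alpha> + m) (\<beta> + n) \<tau>)\<^sup>2
       * theta_char (\<alpha> + m - 1) 0 z \<tau> * theta_char 0 (\<beta> + n - 1) z \<tau>)"
proof -
  have "\<lfloor>of_int (\<beta> + n) / (2::real)\<rfloor> = (\<beta> + n) div 2"
    using floor_divide_of_int_eq[of "\<beta> + n" 2] by simp
  then have wronskian:
    "(-1) ^ nat (((\<alpha> + m) * \<lfloor>of_int (\<beta> + n) / (2::real)\<rfloor>) mod 2) * pi * (theta_null (\<alpha> + m) (\<beta> + n) \<tau>)\<^sup>2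
       * theta_char (\<alpha> + m - 1) 0 z \<tau> * theta_char 0 (\<beta> + n - 1) z \<tau> =
     theta1' z \<tau> * theta_char (\<alpha> + m) (\<beta> + n) z \<tau> - theta_char' (\<alpha> + m) (\<beta> + n) z \<tau> * theta1 z \<tau>"
    using theta_char_wronskian[OF assms(1), of "\<alpha> + m" "\<beta> + n" z] by (simp add: algebra_simps)
  show ?thesis
    unfolding theta_char'_half_period_shift[OF assms(1)] wronskian using assms(2) by (simp add: field_simps)
qed

end
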